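(* Let $F|R$ be an extension of ordered fields with canonical valuation $v$ and assume that $vR$ is a convex subgroup of $vF$. Then the injective maps $\tilde\iota:\mathcal C(R)\to\mathcal C(F)$ that are continuous with respect to the full topologies and compatible with restriction are exactly the maps constructed as follows: for a non-ball cut $C=(D,E)$ of $R$, $\tilde\iota(C)$ is one of $D^{+}_F$ or $E^{-}_F$; if $C$ is the lower edge $B_0^-$ (resp. upper edge $B_0^+$) in $R$ of a ball $B_0\neq R$ with ball complement $(D,E)$ in $R$, then $\tilde\iota(C)=D^{+}_F$ (resp. $E^{-}_F$); and $\tilde\iota((\emptyset,R))=R^{-}_F$, $\tilde\iota((R,\emptyset))=R^{+}_F$.
   Context: The canonical valuation $v$ of an ordered field has as valuation ring the convex hull of $\mathbb Z$. For an ordered field $K$, a cut is a pair $(D,E)$ with $D<E$, $D\cup E=K$; $\mathcal C(K)$ is the set of cuts, ordered by $(D_1,E_1)<(D_2,E_2)$ iff $D_1\subsetneq D_2$. For nonempty $A\subseteq K$, $A^+=(D,K\setminus D)$ with $D$ the smallest initial segment containing $A$, and $A^-=(K\setminus E,E)$ with $E$ the smallest final segment containing $A$; for $A\subseteq R$, $A^{\pm}_F$ are these cuts taken in $F$. For $a\in K$ and a final segment $S$ of $vK$ (possibly empty), $B_S(a,K)=\{b\in K\mid v(a-b)\in S\cup\{\infty\}\}$ is a ball; a ball complement of a ball $B$ is $(D,E)$ with $D<B<E$, $D\cup B\cup E=K$. A cut is a ball cut if it is $B^+$ (upper edge) or $B^-$ (lower edge) of a ball $B$, otherwise a non-ball cut.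 Two cuts are equivalent if equal or the lower and upper edge of the same ball; a subset of $\mathcal C(K)$ is full if closed under equivalence. The interval topology on $\mathcal C(K)$ has basic open sets $(C_1,C_2)$, $(C_1,(K,\emptyset)]$, $[(\emptyset,K),C_2)$; the full topology consists of all full sets open in the interval topology. Restriction of a cut $(D',E')$ of $F$ to $R$ is $(D'\cap R,E'\cap R)$; $\tilde\iota$ is compatible with restriction if the restriction of $\tilde\iota(C)$ is $C$ for all $C$. *)

theory Defs
  imports "HOL-Analysis.Analysis"
begin

text \<open>The big ordered field F is modelled as a type of class linordered_field (F = UNIV);
the subfield R is a subset of it carrying the induced order.\<close>

definition subfield :: "'a::linordered_field set \<Rightarrow> bool" where
  "subfield R \<longleftrightarrow> 0 \<in> R \<and> 1 \<in> R \<and>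
     (\<forall>x\<in>R. \<forall>y\<in>R. x + y \<in> R \<and> x - y \<in> R \<and> x * y \<in> R) \<and>
     (\<forall>x\<in>R. inverse x \<in> R)"

text \<open>Canonical valuation: valuation ring = convex hull of the integers.\<close>
definition can_val_ring :: "'a::linordered_field set" where
  "can_val_ring = {x. \<exists>n::nat. \<bar>x\<bar> \<le> of_nat n}"

text \<open>val_le a b  means  v(a) \<le> v(b)  (with v(0) = \<infinity>).\<close>
definition val_le :: "'a::linordered_field \<Rightarrow> 'a \<Rightarrow> bool" where
  "val_le a b \<longleftrightarrow> b = 0 \<or> (a \<noteq> 0 \<and> b / a \<in> can_val_ring)"

text \<open>vR is a convex subset (subgroup) of vF.\<close>
definition val_convex :: "'a::linordered_field set \<Rightarrow> bool" where
  "val_convex R \<longleftrightarrow> (\<forall>a1\<in>R - {0}. \<forall>a2\<in>R - {0}. \<forall>b. b \<noteq> 0 \<and> val_le a1 b \<and> val_le b a2 \<longrightarrow>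
      (\<exists>c\<in>R - {0}. val_le c b \<and> val_le b c))"

text \<open>A final segment S of vK, represented by the (v-saturated) set of nonzero elements of K
  whose value lies in S.\<close>
definition final_seg :: "'a::linordered_field set \<Rightarrow> 'a set \<Rightarrow> bool" where
  "final_seg K S \<longleftrightarrow> S \<subseteq> K - {0} \<and> (\<forall>x\<in>S. \<forall>y\<in>K - {0}. val_le x y \<longrightarrow> y \<in> S)"

text \<open>B_S(a,K) = {b \<in> K. v(a-b) \<in> S \<union> {\<infinity>}}\<close>
definition ball_S :: "'a::linordered_field set \<Rightarrow> 'a set \<Rightarrow> 'a \<Rightarrow> 'a set" where
  "ball_S K S a = {b\<in>K. a - b = 0 \<or> a - b \<in> S}"

definition is_ball :: "'a::linordered_field set \<Rightarrow> 'a set \<Rightarrow> bool" where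
  "is_ball K B \<longleftrightarrow> (\<exists>a\<in>K. \<exists>S. final_seg K S \<and> B = ball_S K S a)"

definition ball_compl :: "'a::linordered_field set \<Rightarrow> 'a set \<Rightarrow> 'a set \<Rightarrow> 'a set \<Rightarrow> bool" where
  "ball_compl K B D E \<longleftrightarrow> (\<forall>d\<in>D. \<forall>b\<in>B. d < b) \<and> (\<forall>b\<in>B. \<forall>e\<in>E. b < e) \<and> D \<union> B \<union> E = K"

definition cuts :: "'a::linordered_field set \<Rightarrow> ('a set \<times> 'a set) set" where
  "cuts K = {(D, E). (\<forall>d\<in>D. \<forall>e\<in>E. d < e) \<and> D \<union> E = K}"

definition cut_less :: "('a set \<times> 'a set) \<Rightarrow> ('a set \<times> 'a set) \<Rightarrow> bool" where
  "cut_less C1 C2 \<longleftrightarrow> fst C1 \<subset> fst C2"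

definition upper_cut :: "'a::linordered_field set \<Rightarrow> 'a set \<Rightarrow> ('a set \<times> 'a set)" where
  "upper_cut K A = (let D = {x\<in>K. \<exists>a\<in>A. x \<le> a} in (D, K - D))"

definition lower_cut :: "'a::linordered_field set \<Rightarrow> 'a set \<Rightarrow> ('a set \<times> 'a set)" where
  "lower_cut K A = (let E = {x\<in>K. \<exists>a\<in>A. a \<le> x} in (K - E, E))"

definition ball_cut :: "'a::linordered_field set \<Rightarrow> ('a set \<times> 'a set) \<Rightarrow> bool" where
  "ball_cut K C \<longleftrightarrow> (\<exists>B. is_ball K B \<and> (C = upper_cut K B \<or> C = lower_cut K B))"

definition cut_equiv :: "'a::linordered_field set \<Rightarrow> ('a set \<times> 'a set) \<Rightarrow> ('a set \<times> 'a set) \<Rightarrow> bool" where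
  "cut_equiv K C1 C2 \<longleftrightarrow> C1 = C2 \<or>
     (\<exists>B. is_ball K B \<and> {C1, C2} = {lower_cut K B, upper_cut K B})"

definition full_set :: "'a::linordered_field set \<Rightarrow> ('a set \<times> 'a set) set \<Rightarrow> bool" where
  "full_set K U \<longleftrightarrow> U \<subseteq> cuts K \<and> (\<forall>C1\<in>U. \<forall>C2\<in>cuts K. cut_equiv K C1 C2 \<longrightarrow> C2 \<in> U)"

definition interval_top :: "'a::linordered_field set \<Rightarrow> ('a set \<times> 'a set) topology" where
  "interval_top K = topology_generated_by
     ({{C\<in>cuts K. cut_less C1 C \<and> cut_less C C2} | C1 C2. C1 \<in> cuts K \<and> C2 \<in> cuts K}
      \<union> {{C\<in>cuts K. cut_less C1 C} | C1. C1 \<in> cuts K}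
      \<union> {{C\<in>cuts K. cut_less C C2} | C2. C2 \<in> cuts K})"

definition full_top :: "'a::linordered_field set \<Rightarrow> ('a set \<times> 'a set) topology" where
  "full_top K = topology (\<lambda>U. openin (interval_top K) U \<and> full_set K U)"

definition restrict_cut :: "'a set \<Rightarrow> ('a set \<times> 'a set) \<Rightarrow> ('a set \<times> 'a set)" where
  "restrict_cut R C = (fst C \<inter> R, snd C \<inter> R)"

end

theory Submission
  imports Defs
begin

text \<open>
  Compatibility with restriction confines \<open>\<iota> (D, E)\<close> between \<open>D\<^sup>+\<close> and \<open>E\<^sup>-\<close> in \<open>F\<close>, and the
  elements of \<open>F\<close> strictly between \<open>D\<close> and \<open>E\<close> form either the empty set or a ball of \<open>F\<close>
  whose edges are \<open>D\<^sup>+\<close> and \<open>E\<^sup>-\<close>. For a non-ball cut this is because two points of the gap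
  that are not valuatively closer to each other than to \<open>D\<close> and \<open>E\<close> would produce a ball of
  \<open>R\<close> having the cut as an edge; for the edges of a ball of \<open>R\<close> with nonempty radius set the
  convexity of \<open>vR\<close> in \<open>vF\<close> leaves no gap at all.

  If a continuous compatible \<open>\<iota>\<close> sent a cut strictly inside the gap ball \<open>G\<close>, the full open
  set of cuts strictly between the edges of \<open>G\<close> would pull back to a neighbourhood of that cut,
  yet nearby cuts of \<open>R\<close> (one step across a point of \<open>R\<close> or a midpoint) are forced outside
  \<open>G\<close>; the same argument with the convex hull of \<open>R\<close> fixes the images of the two trivial cuts.
  Conversely, a map of the explicit form sends the two edges of a ball of \<open>R\<close> to the two edges
  of a ball of \<open>F\<close>, so preimages of full sets are full, and openness of preimages is checked
  one side at a time at each cut.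
\<close>

section \<open>Valuations, subfields and final segments\<close>

lemma val_le_iff: "a \<noteq> 0 \<Longrightarrow> val_le a b \<longleftrightarrow> (\<exists>n::nat. \<bar>b\<bar> \<le> of_nat n * \<bar>a\<bar>)"
proof -
  assume a: "a \<noteq> 0"
  have "\<bar>b / a\<bar> \<le> of_nat n \<longleftrightarrow> \<bar>b\<bar> \<le> of_nat n * \<bar>a\<bar>" for n
    using a by (simp add: abs_divide divide_le_eq)
  thus ?thesis using a unfolding val_le_def can_val_ring_def
    by (auto intro: exI[of _ 0])
qed

lemma not_val_le: "\<not> val_le a b \<longleftrightarrow> b \<noteq> 0 \<and> (a = 0 \<or> (\<forall>n::nat. of_nat n * \<bar>a\<bar> < \<bar>b\<bar>))"
proof (cases "a = 0")
  case True thus ?thesis by (simp add: val_le_def)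
next
  case False
  have "\<not> (\<forall>n::nat. of_nat n * \<bar>a\<bar> < \<bar>0::'a\<bar>)" by (metis abs_zero mult_zero_left of_nat_0 order_less_irrefl)
  thus ?thesis using False val_le_iff[OF False, of b] by (auto simp: not_le val_le_def)
qed

lemma val_le_nonzero: "val_le a b \<Longrightarrow> b \<noteq> 0 \<Longrightarrow> a \<noteq> 0"
  by (simp add: val_le_def)

lemma val_le_trans: "val_le a b \<Longrightarrow> val_le b c \<Longrightarrow> val_le a c"
proof (cases "c = 0")
  case False
  assume ab: "val_le a b" and bc: "val_le b c"
  hence b: "b \<noteq> 0" using False val_le_nonzero by blast
  hence a: "a \<noteq> 0" using ab val_le_nonzero by blast
  obtain m::nat where m: "\<bar>c\<bar> \<le> of_nat m * \<bar>b\<bar>" using bc b val_le_iff by blast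
  obtain n::nat where n: "\<bar>b\<bar> \<le> of_nat n * \<bar>a\<bar>" using ab a val_le_iff by blast
  have "of_nat m * \<bar>b\<bar> \<le> of_nat m * (of_nat n * \<bar>a\<bar>)" using n by (simp add: mult_left_mono)
  hence "\<bar>c\<bar> \<le> of_nat (m*n) * \<bar>a\<bar>" using m by (simp add: mult.assoc)
  thus ?thesis using a val_le_iff by blast
qed (simp add: val_le_def)

lemma val_le_if_abs_le: "a \<noteq> 0 \<Longrightarrow> \<bar>b\<bar> \<le> \<bar>a\<bar> \<Longrightarrow> val_le a b"
  using val_le_iff[of a b] by (metis mult_1 of_nat_1)

lemma val_le_total: "val_le a b \<or> val_le b a"
proof (cases "a = 0 \<or> b = 0")
  case True thus ?thesis by (auto simp: val_le_def)
next
  case False thus ?thesis using val_le_if_abs_le[of a b] val_le_if_abs_le[of b a] by linarith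
qed

lemma val_le_abs_cong: "\<bar>a\<bar> = \<bar>a'\<bar> \<Longrightarrow> \<bar>b\<bar> = \<bar>b'\<bar> \<Longrightarrow> val_le a b = val_le a' b'"
proof (cases "a = 0")
  case True
  assume "\<bar>a\<bar> = \<bar>a'\<bar>" "\<bar>b\<bar> = \<bar>b'\<bar>"
  thus ?thesis using True by (simp add: val_le_def) (metis abs_eq_0)
next
  case False
  assume "\<bar>a\<bar> = \<bar>a'\<bar>" "\<bar>b\<bar> = \<bar>b'\<bar>"
  thus ?thesis using False by (simp add: val_le_iff)
qed

lemma val_le_divide_of_nat: "n > 0 \<Longrightarrow> val_le (a / of_nat n) a"
proof (cases "a = 0")
  case False
  assume n: "n > 0"
  have "\<bar>a\<bar> = of_nat n * \<bar>a / of_nat n\<bar>" using n by (simp add: abs_divide)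
  moreover have "a / of_nat n \<noteq> 0" using False n by simp
  ultimately show ?thesis by (subst val_le_iff) (auto intro!: exI[of _ n])
qed (simp add: val_le_def)

lemma of_nat_mult_abs_less_if_not_val_le: "\<not> val_le a b \<Longrightarrow> of_nat n * \<bar>a\<bar> < \<bar>b\<bar>"
  using not_val_le[of a b] by auto

lemma abs_less_if_not_val_le: "\<not> val_le a b \<Longrightarrow> \<bar>a\<bar> < \<bar>b\<bar>"
  using of_nat_mult_abs_less_if_not_val_le[of a b 1] by simp

lemma subfield_0: "subfield R \<Longrightarrow> 0 \<in> R"
  and subfield_1: "subfield R \<Longrightarrow> 1 \<in> R"
  and subfield_add: "subfield R \<Longrightarrow> x \<in> R \<Longrightarrow> y \<in> R \<Longrightarrow> x + y \<in> R"
  and subfield_diff: "subfield R \<Longrightarrow> x \<in> R \<Longrightarrow> y \<in> R \<Longrightarrow> x - y \<in> R"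
  and subfield_mult: "subfield R \<Longrightarrow> x \<in> R \<Longrightarrow> y \<in> R \<Longrightarrow> x * y \<in> R"
  and subfield_inverse: "subfield R \<Longrightarrow> x \<in> R \<Longrightarrow> inverse x \<in> R"
  by (simp_all add: subfield_def)

lemma subfield_uminus: "subfield R \<Longrightarrow> x \<in> R \<Longrightarrow> - x \<in> R"
  using subfield_diff[of R 0 x] subfield_0 by auto

lemma subfield_divide: "subfield R \<Longrightarrow> x \<in> R \<Longrightarrow> y \<in> R \<Longrightarrow> x / y \<in> R"
  by (simp add: divide_inverse subfield_mult subfield_inverse)

lemma subfield_of_nat: "subfield R \<Longrightarrow> of_nat n \<in> R"
  by (induction n) (auto simp: subfield_0 subfield_1 subfield_add)

lemma subfield_abs: "subfield R \<Longrightarrow> x \<in> R \<Longrightarrow> \<bar>x\<bar> \<in> R"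
  by (simp add: abs_if subfield_uminus)

lemma subfield_midpoint: "subfield R \<Longrightarrow> x \<in> R \<Longrightarrow> y \<in> R \<Longrightarrow> (x + y) / 2 \<in> R"
  by (metis of_nat_numeral subfield_add subfield_divide subfield_of_nat)

lemma subfield_UNIV: "subfield (UNIV :: 'a::linordered_field set)"
  by (simp add: subfield_def)

lemma final_segD: "final_seg K S \<Longrightarrow> s \<in> S \<Longrightarrow> t \<in> K \<Longrightarrow> t \<noteq> 0 \<Longrightarrow> val_le s t \<Longrightarrow> t \<in> S"
  unfolding final_seg_def by blast

lemma final_seg_subset: "final_seg K S \<Longrightarrow> S \<subseteq> K - {0}"
  unfolding final_seg_def by blast

lemma final_seg_full: "final_seg K (K - {0})"
  by (auto simp: final_seg_def)

lemma final_seg_abs: "final_seg K S \<Longrightarrow> u \<in> S \<Longrightarrow> w \<in> K \<Longrightarrow> \<bar>w\<bar> = \<bar>u\<bar> \<Longrightarrow> w \<in> S"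
  using final_segD[of K S u w] final_seg_subset[of K S] val_le_if_abs_le[of u w] by force

lemma final_seg_uminus: "final_seg K S \<Longrightarrow> subfield K \<Longrightarrow> u \<in> S \<Longrightarrow> - u \<in> S"
  using final_seg_abs[of K S u "-u"] final_seg_subset[of K S] subfield_uminus[of K u] by auto

lemma final_seg_add:
  assumes S: "final_seg K S" and K: "subfield K"
    and u: "u \<in> K" "u = 0 \<or> u \<in> S" and w: "w \<in> K" "w = 0 \<or> w \<in> S"
  shows "u + w = 0 \<or> u + w \<in> S"
proof (cases "u + w = 0")
  case False
  have uw: "u + w \<in> K" using u w K subfield_add by blast
  note nz = False
  show ?thesis
  proof (cases "\<bar>w\<bar> \<le> \<bar>u\<bar>")
    case True
    hence "u \<noteq> 0" using nz by auto
    moreover have "\<bar>u + w\<bar> \<le> of_nat 2 * \<bar>u\<bar>" using True by simp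
    ultimately show ?thesis using final_segD[OF S _ uw nz] val_le_iff u by blast
  next
    case False
    hence "w \<noteq> 0" by auto
    moreover have "\<bar>u + w\<bar> \<le> of_nat 2 * \<bar>w\<bar>" using False by simp
    ultimately show ?thesis using final_segD[OF S _ uw nz] val_le_iff w by blast
  qed
qed simp

lemma final_seg_linear:
  assumes "final_seg K S1" "final_seg K S2"
  shows "S1 \<subseteq> S2 \<or> S2 \<subseteq> S1"
proof (rule ccontr)
  assume "\<not> (S1 \<subseteq> S2 \<or> S2 \<subseteq> S1)"
  then obtain s1 s2 where s: "s1 \<in> S1" "s1 \<notin> S2" "s2 \<in> S2" "s2 \<notin> S1" by blast
  have "s1 \<in> K - {0}" "s2 \<in> K - {0}" using s assms final_seg_subset by blast+
  thus False using final_segD[OF assms(1) s(1), of s2] final_segD[OF assms(2) s(3), of s1] s val_le_total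
    by blast
qed

lemma final_seg_of_nat_mult:
  assumes S: "final_seg R S" and R: "subfield R" and s: "s \<in> S" and m: "m > 0"
  shows "of_nat m * \<bar>s\<bar> \<in> S"
proof -
  have sR: "s \<in> R" "s \<noteq> 0" using s final_seg_subset[OF S] by blast+
  have "val_le s (of_nat m * \<bar>s\<bar>)" using sR by (subst val_le_iff) (auto simp: abs_mult)
  moreover have "of_nat m * \<bar>s\<bar> \<in> R" using subfield_mult[OF R subfield_of_nat[OF R] subfield_abs[OF R sR(1)]] .
  ultimately show ?thesis using final_segD[OF S s] sR m by simp
qed

lemma final_seg_divide_of_nat:
  assumes S: "final_seg R S" and s: "s \<in> R" "s \<noteq> 0" "s \<notin> S" and m: "m > 0"
  shows "\<bar>s\<bar> / of_nat m \<notin> S" "- (\<bar>s\<bar> / of_nat m) \<notin> S"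
proof -
  have v: "val_le (\<bar>s\<bar> / of_nat m) s" "val_le (- (\<bar>s\<bar> / of_nat m)) s"
    using val_le_divide_of_nat[OF m, of "\<bar>s\<bar>"] val_le_abs_cong by (metis abs_abs abs_minus_cancel)+
  show "\<bar>s\<bar> / of_nat m \<notin> S" "- (\<bar>s\<bar> / of_nat m) \<notin> S"
    using final_segD[OF S _ s(1,2) v(1)] final_segD[OF S _ s(1,2) v(2)] s(3) by blast+
qed

section \<open>Cuts and their extensions to the big field\<close>

lemma fst_upper_cut: "fst (upper_cut K A) = {x\<in>K. \<exists>a\<in>A. x \<le> a}"
  and snd_upper_cut: "snd (upper_cut K A) = {x\<in>K. \<forall>a\<in>A. a < x}"
  and fst_lower_cut: "fst (lower_cut K A) = {x\<in>K. \<forall>a\<in>A. x < a}"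
  and snd_lower_cut: "snd (lower_cut K A) = {x\<in>K. \<exists>a\<in>A. a \<le> x}"
  by (auto simp: upper_cut_def lower_cut_def Let_def not_le)

lemma cutsD: "Z \<in> cuts K \<Longrightarrow> snd Z = K - fst Z \<and> fst Z \<subseteq> K"
  unfolding cuts_def by (cases Z) auto

lemma cut_eqI: "Z1 \<in> cuts K \<Longrightarrow> Z2 \<in> cuts K \<Longrightarrow> fst Z1 = fst Z2 \<Longrightarrow> Z1 = Z2"
proof -
  assume a: "Z1 \<in> cuts K" "Z2 \<in> cuts K" "fst Z1 = fst Z2"
  have "snd Z1 = snd Z2" using cutsD[OF a(1)] cutsD[OF a(2)] a(3) by simp
  thus ?thesis using a(3) by (rule prod_eqI[rotated])
qed

lemma cut_fst_less_snd: "Z \<in> cuts K \<Longrightarrow> x \<in> fst Z \<Longrightarrow> y \<in> snd Z \<Longrightarrow> x < y"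
  unfolding cuts_def by (cases Z) auto

lemma cut_fst_down_closed: "Z \<in> cuts K \<Longrightarrow> x \<in> fst Z \<Longrightarrow> y \<in> K \<Longrightarrow> y \<le> x \<Longrightarrow> y \<in> fst Z"
  unfolding cuts_def by (cases Z) (auto dest: leD)

lemma cut_snd_up_closed: "Z \<in> cuts K \<Longrightarrow> x \<in> snd Z \<Longrightarrow> y \<in> K \<Longrightarrow> x \<le> y \<Longrightarrow> y \<in> snd Z"
  unfolding cuts_def by (cases Z) (auto dest: leD)

lemma cut_fst_linear: "Z1 \<in> cuts K \<Longrightarrow> Z2 \<in> cuts K \<Longrightarrow> fst Z1 \<subseteq> fst Z2 \<or> fst Z2 \<subseteq> fst Z1"
proof (rule ccontr)
  assume z: "Z1 \<in> cuts K" "Z2 \<in> cuts K" and n: "\<not> (fst Z1 \<subseteq> fst Z2 \<or> fst Z2 \<subseteq> fst Z1)"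
  then obtain x y where x: "x \<in> fst Z1" "x \<notin> fst Z2" and y: "y \<in> fst Z2" "y \<notin> fst Z1" by blast
  have "x \<in> K" "y \<in> K" using x y z cutsD by blast+
  thus False using cut_fst_down_closed[OF z(2) y(1), of x] cut_fst_down_closed[OF z(1) x(1), of y] x y
    by (cases "x \<le> y") auto
qed

lemma upper_cut_cuts: "upper_cut K A \<in> cuts K"
  unfolding cuts_def upper_cut_def Let_def by (auto simp: not_less) (meson order.trans)

lemma lower_cut_cuts: "lower_cut K A \<in> cuts K"
  unfolding cuts_def lower_cut_def Let_def by (auto simp: not_less) (meson order.trans)

lemma bot_cut: "({}, K) \<in> cuts K"
  and top_cut: "(K, {}) \<in> cuts K"
  by (simp_all add: cuts_def)

lemma lower_cut_self: "lower_cut K K = ({}, K)"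
  and upper_cut_self: "upper_cut K K = (K, {})"
  unfolding lower_cut_def upper_cut_def Let_def by blast+

lemma cut_eq_lower_cut_min:
  assumes C: "(D, E) \<in> cuts R" and m: "m \<in> E" "\<forall>e\<in>E. m \<le> e"
  shows "(D, E) = lower_cut R {m}"
  using C m by (intro cut_eqI[OF C lower_cut_cuts]) (force simp: cuts_def fst_lower_cut)

text \<open>For a cut \<open>C = (D, E)\<close> of \<open>R\<close> these are \<open>D\<^sup>+\<close> and \<open>E\<^sup>-\<close> taken in \<open>F\<close>, the least and the
  greatest cut of \<open>F\<close> restricting to \<open>C\<close>.\<close>

definition least_ext :: "'a::linordered_field set \<times> 'a set \<Rightarrow> 'a set \<times> 'a set" where
  "least_ext C = upper_cut UNIV (fst C)"

definition greatest_ext :: "'a::linordered_field set \<times> 'a set \<Rightarrow> 'a set \<times> 'a set" where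
  "greatest_ext C = lower_cut UNIV (snd C)"

lemma least_ext_cuts: "least_ext C \<in> cuts UNIV"
  and greatest_ext_cuts: "greatest_ext C \<in> cuts UNIV"
  by (simp_all add: least_ext_def greatest_ext_def upper_cut_cuts lower_cut_cuts)

lemma fst_least_ext: "fst (least_ext C) = {y. \<exists>d\<in>fst C. y \<le> d}"
  and fst_greatest_ext: "fst (greatest_ext C) = {y. \<forall>e\<in>snd C. y < e}"
  and snd_greatest_ext: "snd (greatest_ext C) = {y. \<exists>e\<in>snd C. e \<le> y}"
  by (simp_all add: least_ext_def greatest_ext_def fst_upper_cut fst_lower_cut snd_lower_cut)

lemma restrict_least_ext:
  assumes C: "C \<in> cuts R"
  shows "restrict_cut R (least_ext C) = C"
proof -
  have "fst (least_ext C) \<inter> R = fst C"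
    using cutsD[OF C] cut_fst_down_closed[OF C] by (auto simp: fst_least_ext)
  moreover have "snd (least_ext C) = UNIV - fst (least_ext C)" using least_ext_cuts cutsD by blast
  moreover have "snd C = R - fst C" using C cutsD by blast
  ultimately show ?thesis unfolding restrict_cut_def by (intro prod_eqI) auto
qed

lemma restrict_greatest_ext:
  assumes C: "C \<in> cuts R"
  shows "restrict_cut R (greatest_ext C) = C"
proof -
  have "snd (greatest_ext C) \<inter> R = snd C"
    using cutsD[OF C] cut_snd_up_closed[OF C] by (auto simp: snd_greatest_ext)
  moreover have "fst (greatest_ext C) = UNIV - snd (greatest_ext C)" using greatest_ext_cuts cutsD by blast
  moreover have "fst C = R - snd C" using C cutsD by blast
  ultimately show ?thesis unfolding restrict_cut_def by (intro prod_eqI) auto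
qed

lemma least_ext_le_greatest_ext: "C \<in> cuts R \<Longrightarrow> fst (least_ext C) \<subseteq> fst (greatest_ext C)"
  using cut_fst_less_snd[of C R] by (force simp: fst_least_ext fst_greatest_ext)

lemma restrict_cut_eq_between:
  assumes Z: "Z \<in> cuts UNIV" and r: "restrict_cut R Z = C"
  shows "fst (least_ext C) \<subseteq> fst Z" "fst Z \<subseteq> fst (greatest_ext C)"
  using r cut_fst_down_closed[OF Z] cut_fst_less_snd[OF Z]
  by (auto simp: restrict_cut_def fst_least_ext fst_greatest_ext)

lemma fst_psubset_if_separated:
  assumes Z1: "Z1 \<in> cuts K" and Z2: "Z2 \<in> cuts K" and r: "r \<in> snd Z1" "r \<in> fst Z2"
  shows "fst Z1 \<subset> fst Z2"
  using cut_fst_less_snd[OF Z1 _ r(1)] cut_fst_down_closed[OF Z2 r(2)] cutsD[OF Z1] r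
  by (auto intro: less_imp_le)

lemma restrict_cut_fst_subset: "restrict_cut R Z = C \<Longrightarrow> fst C \<subseteq> fst Z"
  and restrict_cut_snd_subset: "restrict_cut R Z = C \<Longrightarrow> snd C \<subseteq> snd Z"
  by (auto simp: restrict_cut_def)

lemma exts_between_edges_of_R:
  assumes Z: "Z \<in> cuts R" and ne: "fst Z \<noteq> {}" "snd Z \<noteq> {}"
  shows "fst (lower_cut UNIV R) \<subseteq> fst (least_ext Z)" "fst (greatest_ext Z) \<subseteq> fst (upper_cut UNIV R)"
proof -
  obtain d e where "d \<in> fst Z" "e \<in> snd Z" using ne by blast
  moreover have "d \<in> R" "e \<in> R" using cutsD[OF Z] calculation by auto
  ultimately show "fst (lower_cut UNIV R) \<subseteq> fst (least_ext Z)" "fst (greatest_ext Z) \<subseteq> fst (upper_cut UNIV R)"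
    by (auto simp: fst_lower_cut fst_upper_cut fst_least_ext fst_greatest_ext intro: less_imp_le)
qed

lemma fst_lower_cut_single: "fst (lower_cut R {e}) = {x\<in>R. x < e}"
  and fst_upper_cut_single: "fst (upper_cut R {d}) = {x\<in>R. x \<le> d}"
  by (simp_all add: fst_lower_cut fst_upper_cut)

lemma cut_eq_if_below_min_successor:
  assumes C: "(D, E) \<in> cuts R" and m: "m \<in> E" "\<forall>e\<in>E. m \<le> e"
    and Z: "Z \<in> cuts R" "D \<subseteq> fst Z" "fst Z \<subset> fst (upper_cut R {m})"
  shows "Z = (D, E)"
proof -
  have "m \<notin> fst Z"
    using cut_fst_down_closed[OF Z(1)] Z(3) by (auto simp: fst_upper_cut_single)
  moreover have "fst Z \<subseteq> D \<union> {m}"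
    using Z(3) C m by (auto simp: fst_upper_cut_single cuts_def dest: order.antisym)
  ultimately have "fst Z = D" using Z(2) by blast
  thus ?thesis using cut_eqI[OF Z(1) C] by simp
qed

lemma cut_eq_if_above_max_predecessor:
  assumes C: "(D, E) \<in> cuts R" and m: "m \<in> D" "\<forall>d\<in>D. d \<le> m"
    and Z: "Z \<in> cuts R" "fst (lower_cut R {m}) \<subset> fst Z" "fst Z \<subseteq> D"
  shows "Z = (D, E)"
proof -
  obtain z where z: "z \<in> fst Z" "\<not> z < m" using Z(2) cutsD[OF Z(1)] by (auto simp: fst_lower_cut_single)
  have mR: "m \<in> R" using C m(1) by (auto simp: cuts_def)
  have "m \<in> fst Z" using cut_fst_down_closed[OF Z(1) z(1) mR] z(2) by simp
  hence "D \<subseteq> fst Z" using cut_fst_down_closed[OF Z(1)] C m by (auto simp: cuts_def)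
  hence "fst Z = D" using Z(3) by blast
  thus ?thesis using cut_eqI[OF Z(1) C] by simp
qed

section \<open>Balls\<close>

lemma ball_S_subset: "ball_S K S a \<subseteq> K"
  by (auto simp: ball_S_def)

lemma ball_S_center: "a \<in> K \<Longrightarrow> a \<in> ball_S K S a"
  by (simp add: ball_S_def)

lemma ball_S_empty: "a \<in> K \<Longrightarrow> ball_S K {} a = {a}"
  by (auto simp: ball_S_def)

lemma ball_S_full: "subfield K \<Longrightarrow> a \<in> K \<Longrightarrow> ball_S K (K - {0}) a = K"
  by (auto simp: ball_S_def subfield_diff)

lemma ball_S_mono: "S1 \<subseteq> S2 \<Longrightarrow> ball_S K S1 c \<subseteq> ball_S K S2 c"
  by (auto simp: ball_S_def)

lemma ball_S_recenter:
  assumes S: "final_seg K S" and K: "subfield K" and b: "b \<in> ball_S K S a"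
  shows "ball_S K S b = ball_S K S a"
proof -
  have bK: "b \<in> K" and ab: "a - b = 0 \<or> a - b \<in> S" using b by (auto simp: ball_S_def)
  have abK: "a - b \<in> K" using ab final_seg_subset[OF S] subfield_0[OF K] by auto
  hence aK: "a \<in> K" using subfield_add[OF K abK bK] by simp
  have ba: "b - a = 0 \<or> b - a \<in> S" using ab final_seg_uminus[OF S K, of "a - b"] by auto
  have baK: "b - a \<in> K" using aK bK K subfield_diff by blast
  have "a - z = 0 \<or> a - z \<in> S" if "z \<in> K" "b - z = 0 \<or> b - z \<in> S" for z
    using final_seg_add[OF S K abK ab _ that(2)] subfield_diff[OF K bK that(1)] by simp
  moreover have "b - z = 0 \<or> b - z \<in> S" if "z \<in> K" "a - z = 0 \<or> a - z \<in> S" for z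
    using final_seg_add[OF S K baK ba _ that(2)] subfield_diff[OF K aK that(1)] by simp
  ultimately show ?thesis by (auto simp: ball_S_def)
qed

lemma ball_S_dist_less:
  assumes S: "final_seg K S" and K: "subfield K" and aK: "a \<in> K"
    and b: "b \<in> ball_S K S a" and z: "z \<in> K" "z \<notin> ball_S K S a"
  shows "\<bar>a - b\<bar> < \<bar>a - z\<bar>"
proof (cases "a - b = 0")
  case False
  hence "a - b \<in> S" using b by (auto simp: ball_S_def)
  moreover have "a - z \<in> K" "a - z \<noteq> 0" "a - z \<notin> S" using z subfield_diff[OF K aK] by (auto simp: ball_S_def)
  ultimately show ?thesis using final_segD[OF S] abs_less_if_not_val_le by blast
qed (use z in \<open>auto simp: ball_S_def\<close>)

lemma ball_S_nested:
  assumes S1: "final_seg K S1" and S2: "final_seg K S2" and K: "subfield K"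
    and c1: "c \<in> ball_S K S1 a1" and c2: "c \<in> ball_S K S2 a2"
  shows "ball_S K S1 a1 \<subseteq> ball_S K S2 a2 \<or> ball_S K S2 a2 \<subseteq> ball_S K S1 a1"
  using ball_S_recenter[OF S1 K c1] ball_S_recenter[OF S2 K c2] final_seg_linear[OF S1 S2] ball_S_mono
  by metis

lemma is_ball_nonempty: "is_ball K B \<Longrightarrow> B \<noteq> {}"
  unfolding is_ball_def using ball_S_center by blast

lemma is_ball_self: "subfield K \<Longrightarrow> is_ball K K"
  unfolding is_ball_def using final_seg_full ball_S_full subfield_0 by metis

lemma is_ball_singleton: "a \<in> K \<Longrightarrow> is_ball K {a}"
  unfolding is_ball_def using ball_S_empty[of a K] by (auto simp: final_seg_def)

lemma ball_S_neq_full: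
  assumes S: "final_seg K S" and K: "subfield K" and aK: "a \<in> K" and ne: "ball_S K S a \<noteq> K"
  obtains t where "t \<in> K" "t \<noteq> 0" "t \<notin> S"
proof -
  have "S \<noteq> K - {0}" using ne ball_S_full[OF K aK] by auto
  thus ?thesis using final_seg_subset[OF S] that by blast
qed

definition strict_lower_bounds :: "'a::linorder set \<Rightarrow> 'a set \<Rightarrow> 'a set" where
  "strict_lower_bounds K B = {x\<in>K. \<forall>b\<in>B. x < b}"

definition strict_upper_bounds :: "'a::linorder set \<Rightarrow> 'a set \<Rightarrow> 'a set" where
  "strict_upper_bounds K B = {x\<in>K. \<forall>b\<in>B. b < x}"

lemma ball_compl_strict_bounds:
  assumes S: "final_seg K S" and K: "subfield K" and aK: "a \<in> K"
  shows "ball_compl K (ball_S K S a) (strict_lower_bounds K (ball_S K S a)) (strict_upper_bounds K (ball_S K S a))"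
proof -
  let ?B = "ball_S K S a"
  have "x \<in> strict_lower_bounds K ?B \<or> x \<in> ?B \<or> x \<in> strict_upper_bounds K ?B" if x: "x \<in> K" for x
  proof (cases "x \<in> ?B")
    case False
    have lt: "\<bar>a - b\<bar> < \<bar>a - x\<bar>" if "b \<in> ?B" for b
      using ball_S_dist_less[OF S K aK that x False] .
    have "x \<noteq> a" using False aK ball_S_center by metis
    hence "(\<forall>b\<in>?B. x < b) \<or> (\<forall>b\<in>?B. b < x)" using lt by (cases "x < a") fastforce+
    thus ?thesis using x by (auto simp: strict_lower_bounds_def strict_upper_bounds_def)
  qed simp
  thus ?thesis unfolding ball_compl_def strict_lower_bounds_def strict_upper_bounds_def using ball_S_subset by blast
qed

lemma ball_compl_unique:
  assumes "ball_compl K B D E" "B \<noteq> {}"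
  shows "D = strict_lower_bounds K B" "E = strict_upper_bounds K B"
proof -
  have h: "\<forall>d\<in>D. \<forall>b\<in>B. d < b" "\<forall>b\<in>B. \<forall>e\<in>E. b < e" "D \<union> B \<union> E = K"
    using assms(1) unfolding ball_compl_def by blast+
  obtain b0 where b0: "b0 \<in> B" using assms(2) by blast
  have "x \<notin> E" if "x < b0" for x using h(2) b0 that by (meson less_asym)
  moreover have "x \<notin> D" if "b0 < x" for x using h(1) b0 that by (meson less_asym)
  ultimately show "D = strict_lower_bounds K B" "E = strict_upper_bounds K B"
    using h b0 unfolding strict_lower_bounds_def strict_upper_bounds_def by blast+
qed

lemma lower_cut_ball_compl:
  assumes "ball_compl K B D E" "B \<noteq> {}"
  shows "lower_cut K B = (D, B \<union> E)"
proof -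
  have h: "\<forall>d\<in>D. \<forall>b\<in>B. d < b" "\<forall>b\<in>B. \<forall>e\<in>E. b < e" "D \<union> B \<union> E = K"
    using assms(1) unfolding ball_compl_def by blast+
  obtain b0 where "b0 \<in> B" using assms(2) by blast
  hence "snd (lower_cut K B) = B \<union> E"
    using h by (auto simp: snd_lower_cut dest: leD) (meson less_imp_le)
  moreover have "D \<inter> (B \<union> E) = {}" using h \<open>b0 \<in> B\<close> by (meson disjoint_iff less_asym less_trans Un_iff)
  moreover have "fst (lower_cut K B) = K - snd (lower_cut K B)" using cutsD[OF lower_cut_cuts] by blast
  ultimately show ?thesis using h(3) by (intro prod_eqI) auto
qed

lemma upper_cut_ball_compl:
  assumes "ball_compl K B D E" "B \<noteq> {}"
  shows "upper_cut K B = (D \<union> B, E)"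
proof -
  have h: "\<forall>d\<in>D. \<forall>b\<in>B. d < b" "\<forall>b\<in>B. \<forall>e\<in>E. b < e" "D \<union> B \<union> E = K"
    using assms(1) unfolding ball_compl_def by blast+
  obtain b0 where "b0 \<in> B" using assms(2) by blast
  hence "fst (upper_cut K B) = D \<union> B"
    using h by (auto simp: fst_upper_cut intro: less_imp_le dest: leD)
  moreover have "E \<inter> (D \<union> B) = {}" using h \<open>b0 \<in> B\<close> by (meson disjoint_iff less_asym less_trans Un_iff)
  moreover have "snd (upper_cut K B) = K - fst (upper_cut K B)" using cutsD[OF upper_cut_cuts] by blast
  ultimately show ?thesis using h(3) by (intro prod_eqI) auto
qed

lemma ball_compl_strict_bounds_if_is_ball:
  "subfield R \<Longrightarrow> is_ball R B \<Longrightarrow> ball_compl R B (strict_lower_bounds R B) (strict_upper_bounds R B)"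
  unfolding is_ball_def using ball_compl_strict_bounds by blast

lemma lower_cut_ball: "subfield R \<Longrightarrow> is_ball R B \<Longrightarrow> lower_cut R B = (strict_lower_bounds R B, B \<union> strict_upper_bounds R B)"
  using lower_cut_ball_compl ball_compl_strict_bounds_if_is_ball is_ball_nonempty by blast

lemma upper_cut_ball: "subfield R \<Longrightarrow> is_ball R B \<Longrightarrow> upper_cut R B = (strict_lower_bounds R B \<union> B, strict_upper_bounds R B)"
  using upper_cut_ball_compl ball_compl_strict_bounds_if_is_ball is_ball_nonempty by blast

lemma lower_cut_psubset_upper_cut:
  "B \<noteq> {} \<Longrightarrow> fst (lower_cut UNIV B) \<subset> fst (upper_cut UNIV B)"
  by (auto simp: fst_lower_cut fst_upper_cut intro: less_imp_le)

lemma ball_edges_mono: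
  assumes "B \<subseteq> B'"
  shows "fst (lower_cut UNIV B') \<subseteq> fst (lower_cut UNIV B)" "fst (upper_cut UNIV B) \<subseteq> fst (upper_cut UNIV B')"
  using assms by (auto simp: fst_lower_cut fst_upper_cut)

lemma ball_psubset_edges:
  assumes B: "is_ball UNIV B" and B0: "is_ball UNIV B0" and sub: "B \<subset> B0"
  shows "fst (lower_cut UNIV B0) \<subset> fst (lower_cut UNIV B)"
        "fst (upper_cut UNIV B) \<subset> fst (upper_cut UNIV B0)"
proof -
  have K: "subfield (UNIV::'a set)" by (rule subfield_UNIV)
  obtain c S where S: "final_seg UNIV S" and Bc: "B = ball_S UNIV S c" using B by (auto simp: is_ball_def)
  obtain a0 S0 where S0: "final_seg UNIV S0" and Ba0: "B0 = ball_S UNIV S0 a0" using B0 by (auto simp: is_ball_def)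
  have "c \<in> ball_S UNIV S0 a0" using Bc ball_S_center sub Ba0 by blast
  hence B0c: "B0 = ball_S UNIV S0 c" using ball_S_recenter[OF S0 K] Ba0 by blast
  obtain z where z: "z \<in> B0" "z \<notin> B" using sub by blast
  define w where "w = \<bar>c - z\<bar>"
  have zc: "c - z \<noteq> 0" "c - z \<in> S0" "c - z \<notin> S" using z B0c Bc by (auto simp: ball_S_def)
  have "-w \<in> S0" "w \<in> S0" using final_seg_abs[OF S0 zc(2)] by (auto simp: w_def)
  moreover have "-w \<notin> S" "w \<notin> S" using final_seg_abs[OF S, of _ "c - z"] zc(3) by (force simp: w_def)+
  moreover have wpos: "w > 0" using zc(1) by (simp add: w_def)
  ultimately have z1: "c + w \<in> B0" "c + w \<notin> B" "c - w \<in> B0" "c - w \<notin> B"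
    using B0c Bc by (auto simp: ball_S_def)
  have close: "\<bar>c - b\<bar> < w" if "b \<in> B" for b
    using ball_S_dist_less[OF S K _ _ _ z1(2)[unfolded Bc]] that Bc wpos by auto
  have "c - w < b \<and> b < c + w" if "b \<in> B" for b
    using close[OF that] by (auto simp: abs_less_iff)
  hence "c - w \<in> fst (lower_cut UNIV B)" "c + w \<notin> fst (upper_cut UNIV B)"
    by (auto simp: fst_lower_cut fst_upper_cut not_le)
  moreover have "c - w \<notin> fst (lower_cut UNIV B0)" "c + w \<in> fst (upper_cut UNIV B0)"
    using z1 by (auto simp: fst_lower_cut fst_upper_cut)
  ultimately show "fst (lower_cut UNIV B0) \<subset> fst (lower_cut UNIV B)"
        "fst (upper_cut UNIV B) \<subset> fst (upper_cut UNIV B0)"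
    using ball_edges_mono[OF psubset_imp_subset[OF sub]] by blast+
qed

text \<open>The midpoint of the two centres lies in neither ball, since its distance to each centre
  has the same value as the distance between the centres.\<close>

lemma disjoint_balls_separated:
  assumes B: "is_ball UNIV B" and B0: "is_ball UNIV B0" and dis: "B \<inter> B0 = {}"
  obtains m where "(\<forall>b\<in>B. b < m) \<and> (\<forall>b\<in>B0. m < b) \<or> (\<forall>b\<in>B0. b < m) \<and> (\<forall>b\<in>B. m < b)"
proof -
  have K: "subfield (UNIV::'a set)" by (rule subfield_UNIV)
  obtain a S where S: "final_seg UNIV S" and Ba: "B = ball_S UNIV S a" using B by (auto simp: is_ball_def)
  obtain a0 S0 where S0: "final_seg UNIV S0" and Ba0: "B0 = ball_S UNIV S0 a0" using B0 by (auto simp: is_ball_def)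
  have n: "a0 \<notin> B" "a \<notin> B0" using Ba Ba0 ball_S_center dis by blast+
  define m where "m = (a + a0) / 2"
  have ne: "a \<noteq> a0" using n Ba ball_S_center by blast
  have half: "a - m = (a - a0) / of_nat 2" "a0 - m = (a0 - a) / of_nat 2" by (simp_all add: m_def field_simps)
  have v: "val_le (a - m) (a - a0)" "val_le (a0 - m) (a0 - a)"
    unfolding half by (rule val_le_divide_of_nat, simp)+
  have mB: "m \<notin> B"
  proof
    assume "m \<in> B"
    hence "a - m \<in> S" using Ba ne by (auto simp: ball_S_def m_def field_simps)
    hence "a - a0 \<in> S" using final_segD[OF S _ _ _ v(1)] ne by simp
    thus False using n(1) Ba by (simp add: ball_S_def)
  qed
  have mB0: "m \<notin> B0"
  proof
    assume "m \<in> B0"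
    hence "a0 - m \<in> S0" using Ba0 ne by (auto simp: ball_S_def m_def field_simps)
    hence "a0 - a \<in> S0" using final_segD[OF S0 _ _ _ v(2)] ne by simp
    thus False using n(2) Ba0 by (simp add: ball_S_def)
  qed
  have l1: "\<bar>a - b\<bar> < \<bar>a - m\<bar>" if "b \<in> B" for b
    using ball_S_dist_less[OF S K _ _ _ mB[unfolded Ba]] that Ba by auto
  have l2: "\<bar>a0 - b\<bar> < \<bar>a0 - m\<bar>" if "b \<in> B0" for b
    using ball_S_dist_less[OF S0 K _ _ _ mB0[unfolded Ba0]] that Ba0 by auto
  have below: "b < m" if "\<bar>x - b\<bar> < \<bar>x - m\<bar>" "x < m" for x b
    using that by (auto simp: abs_less_iff abs_if split: if_splits)
  have above: "m < b" if "\<bar>x - b\<bar> < \<bar>x - m\<bar>" "m < x" for x b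
    using that by (auto simp: abs_less_iff abs_if split: if_splits)
  have "a < m \<and> m < a0 \<or> a0 < m \<and> m < a" using ne by (auto simp: m_def field_simps)
  thus ?thesis using below above l1 l2 that by blast
qed

lemma separated_edges:
  assumes "\<forall>b\<in>X. b < m" "\<forall>b\<in>Y. m < b"
  shows "fst (upper_cut UNIV X) \<subset> fst (lower_cut UNIV Y)"
proof -
  have "fst (upper_cut UNIV X) \<subseteq> {y. y < m}" "{y. y \<le> m} \<subseteq> fst (lower_cut UNIV Y)"
    using assms by (auto simp: fst_upper_cut fst_lower_cut)
  hence "fst (upper_cut UNIV X) \<subseteq> fst (lower_cut UNIV Y)" "m \<in> fst (lower_cut UNIV Y)"
    "m \<notin> fst (upper_cut UNIV X)" by (auto dest: less_imp_le)
  thus ?thesis by blast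
qed

lemma ball_edges_cases:
  assumes B: "is_ball UNIV B" and B0: "is_ball UNIV B0"
  shows "B = B0
    \<or> (fst (lower_cut UNIV B0) \<subset> fst (lower_cut UNIV B) \<and> fst (upper_cut UNIV B) \<subset> fst (upper_cut UNIV B0))
    \<or> (fst (lower_cut UNIV B) \<subset> fst (lower_cut UNIV B0) \<and> fst (upper_cut UNIV B0) \<subset> fst (upper_cut UNIV B))
    \<or> fst (upper_cut UNIV B) \<subset> fst (lower_cut UNIV B0)
    \<or> fst (upper_cut UNIV B0) \<subset> fst (lower_cut UNIV B)"
  (is "_ \<or> ?inner \<or> ?outer \<or> ?left \<or> ?right")
proof (cases "B \<inter> B0 = {}")
  case True
  then obtain m where "(\<forall>b\<in>B. b < m) \<and> (\<forall>b\<in>B0. m < b) \<or> (\<forall>b\<in>B0. b < m) \<and> (\<forall>b\<in>B. m < b)"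
    using disjoint_balls_separated[OF B B0] by blast
  thus ?thesis
  proof (elim disjE conjE)
    assume "\<forall>b\<in>B. b < m" "\<forall>b\<in>B0. m < b"
    hence ?left by (rule separated_edges)
    thus ?thesis by blast
  next
    assume "\<forall>b\<in>B0. b < m" "\<forall>b\<in>B. m < b"
    hence ?right by (rule separated_edges)
    thus ?thesis by blast
  qed
next
  case False
  then obtain c where c: "c \<in> B" "c \<in> B0" by blast
  obtain a S where S: "final_seg UNIV S" and Ba: "B = ball_S UNIV S a" using B unfolding is_ball_def by blast
  obtain a0 S0 where S0: "final_seg UNIV S0" and Ba0: "B0 = ball_S UNIV S0 a0" using B0 unfolding is_ball_def by blast
  have "B \<subseteq> B0 \<or> B0 \<subseteq> B" using ball_S_nested[OF S S0 subfield_UNIV] c Ba Ba0 by simp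
  moreover have "B \<subset> B0 \<Longrightarrow> ?inner" using ball_psubset_edges[OF B B0] by (rule conjI)
  moreover have "B0 \<subset> B \<Longrightarrow> ?outer" using ball_psubset_edges[OF B0 B] by (rule conjI)
  ultimately show ?thesis by (metis psubsetI)
qed

lemma full_setI:
  assumes "U \<subseteq> cuts K"
    and "\<And>B. is_ball K B \<Longrightarrow> lower_cut K B \<in> U \<or> upper_cut K B \<in> U \<Longrightarrow> lower_cut K B \<in> U \<and> upper_cut K B \<in> U"
  shows "full_set K U"
  unfolding full_set_def cut_equiv_def
proof (intro conjI assms(1) ballI impI)
  fix C1 C2 assume h: "C1 \<in> U" "C2 \<in> cuts K" "C1 = C2 \<or> (\<exists>B. is_ball K B \<and> {C1, C2} = {lower_cut K B, upper_cut K B})"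
  show "C2 \<in> U"
  proof (cases "C1 = C2")
    case False
    then obtain B where B: "is_ball K B" "{C1, C2} = {lower_cut K B, upper_cut K B}" using h by blast
    hence "C1 = lower_cut K B \<or> C1 = upper_cut K B" "C2 = lower_cut K B \<or> C2 = upper_cut K B"
      by (auto simp: doubleton_eq_iff)
    thus ?thesis using assms(2)[OF B(1)] h(1) by metis
  qed (use h in simp)
qed

lemma full_setD: "full_set K U \<Longrightarrow> X \<in> U \<Longrightarrow> Y \<in> cuts K \<Longrightarrow> cut_equiv K X Y \<Longrightarrow> Y \<in> U"
  unfolding full_set_def by blast

lemma cut_equiv_edges:
  "is_ball K G \<Longrightarrow> cut_equiv K (lower_cut K G) (upper_cut K G)"
  "is_ball K G \<Longrightarrow> cut_equiv K (upper_cut K G) (lower_cut K G)"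
  unfolding cut_equiv_def by (blast, metis insert_commute)

definition inner_cuts :: "'a::linordered_field set \<Rightarrow> ('a set \<times> 'a set) set" where
  "inner_cuts B = {Z\<in>cuts UNIV. cut_less (lower_cut UNIV B) Z \<and> cut_less Z (upper_cut UNIV B)}"

definition outer_cuts :: "'a::linordered_field set \<Rightarrow> ('a set \<times> 'a set) set" where
  "outer_cuts B = {Z\<in>cuts UNIV. cut_less Z (lower_cut UNIV B) \<or> cut_less (upper_cut UNIV B) Z}"

lemma edge_inside_imp_edges_inside:
  fixes L H L0 H0 :: "'b set"
  assumes "L \<subset> H" "L0 \<subset> H0"
    and "(L = L0 \<and> H = H0) \<or> (L0 \<subset> L \<and> H \<subset> H0) \<or> (L \<subset> L0 \<and> H0 \<subset> H) \<or> H \<subset> L0 \<or> H0 \<subset> L"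
    and "(L0 \<subset> L \<and> L \<subset> H0) \<or> (L0 \<subset> H \<and> H \<subset> H0)"
  shows "(L0 \<subset> L \<and> L \<subset> H0) \<and> (L0 \<subset> H \<and> H \<subset> H0)"
  using assms by (smt (verit) order.strict_trans order.asym)

lemma edge_outside_imp_edges_outside:
  fixes L H L0 H0 :: "'b set"
  assumes "L \<subset> H" "L0 \<subset> H0"
    and "(L = L0 \<and> H = H0) \<or> (L0 \<subset> L \<and> H \<subset> H0) \<or> (L \<subset> L0 \<and> H0 \<subset> H) \<or> H \<subset> L0 \<or> H0 \<subset> L"
    and "(L \<subset> L0 \<or> H0 \<subset> L) \<or> (H \<subset> L0 \<or> H0 \<subset> H)"
  shows "(L \<subset> L0 \<or> H0 \<subset> L) \<and> (H \<subset> L0 \<or> H0 \<subset> H)"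
  using assms by (smt (verit) order.strict_trans order.asym)

lemma full_set_inner_cuts: "is_ball UNIV B0 \<Longrightarrow> full_set UNIV (inner_cuts B0)"
proof (rule full_setI)
  fix B assume B0: "is_ball UNIV B0" and B: "is_ball UNIV B"
    and "lower_cut UNIV B \<in> inner_cuts B0 \<or> upper_cut UNIV B \<in> inner_cuts B0"
  moreover note lower_cut_psubset_upper_cut[OF is_ball_nonempty[OF B]]
    lower_cut_psubset_upper_cut[OF is_ball_nonempty[OF B0]]
  moreover have "(fst (lower_cut UNIV B) = fst (lower_cut UNIV B0) \<and> fst (upper_cut UNIV B) = fst (upper_cut UNIV B0))
    \<or> (fst (lower_cut UNIV B0) \<subset> fst (lower_cut UNIV B) \<and> fst (upper_cut UNIV B) \<subset> fst (upper_cut UNIV B0))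
    \<or> (fst (lower_cut UNIV B) \<subset> fst (lower_cut UNIV B0) \<and> fst (upper_cut UNIV B0) \<subset> fst (upper_cut UNIV B))
    \<or> fst (upper_cut UNIV B) \<subset> fst (lower_cut UNIV B0)
    \<or> fst (upper_cut UNIV B0) \<subset> fst (lower_cut UNIV B)"
    using ball_edges_cases[OF B B0] by metis
  ultimately show "lower_cut UNIV B \<in> inner_cuts B0 \<and> upper_cut UNIV B \<in> inner_cuts B0"
    using edge_inside_imp_edges_inside lower_cut_cuts upper_cut_cuts
    unfolding inner_cuts_def cut_less_def by (smt (verit) mem_Collect_eq)
qed (auto simp: inner_cuts_def)

lemma full_set_outer_cuts: "is_ball UNIV B0 \<Longrightarrow> full_set UNIV (outer_cuts B0)"
proof (rule full_setI)
  fix B assume B0: "is_ball UNIV B0" and B: "is_ball UNIV B"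
    and "lower_cut UNIV B \<in> outer_cuts B0 \<or> upper_cut UNIV B \<in> outer_cuts B0"
  moreover note lower_cut_psubset_upper_cut[OF is_ball_nonempty[OF B]]
    lower_cut_psubset_upper_cut[OF is_ball_nonempty[OF B0]]
  moreover have "(fst (lower_cut UNIV B) = fst (lower_cut UNIV B0) \<and> fst (upper_cut UNIV B) = fst (upper_cut UNIV B0))
    \<or> (fst (lower_cut UNIV B0) \<subset> fst (lower_cut UNIV B) \<and> fst (upper_cut UNIV B) \<subset> fst (upper_cut UNIV B0))
    \<or> (fst (lower_cut UNIV B) \<subset> fst (lower_cut UNIV B0) \<and> fst (upper_cut UNIV B0) \<subset> fst (upper_cut UNIV B))
    \<or> fst (upper_cut UNIV B) \<subset> fst (lower_cut UNIV B0)
    \<or> fst (upper_cut UNIV B0) \<subset> fst (lower_cut UNIV B)"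
    using ball_edges_cases[OF B B0] by metis
  ultimately show "lower_cut UNIV B \<in> outer_cuts B0 \<and> upper_cut UNIV B \<in> outer_cuts B0"
    using edge_outside_imp_edges_outside lower_cut_cuts upper_cut_cuts
    unfolding outer_cuts_def cut_less_def by (smt (verit) mem_Collect_eq)
qed (auto simp: outer_cuts_def)

section \<open>The interval and the full topology on cuts\<close>

definition interval_basis :: "'a::linordered_field set \<Rightarrow> ('a set \<times> 'a set) set set" where
  "interval_basis K = ({{C\<in>cuts K. cut_less C1 C \<and> cut_less C C2} | C1 C2. C1 \<in> cuts K \<and> C2 \<in> cuts K}
      \<union> {{C\<in>cuts K. cut_less C1 C} | C1. C1 \<in> cuts K}
      \<union> {{C\<in>cuts K. cut_less C C2} | C2. C2 \<in> cuts K})"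

lemma interval_top_eq: "interval_top K = topology_generated_by (interval_basis K)"
  by (simp add: interval_top_def interval_basis_def)

lemma openin_interval_top_basis: "S \<in> interval_basis K \<Longrightarrow> openin (interval_top K) S"
  unfolding interval_top_eq openin_topology_generated_by_iff by (rule generate_topology_on.Basis)

lemma openin_interval_top_above: "C1 \<in> cuts K \<Longrightarrow> openin (interval_top K) {C\<in>cuts K. cut_less C1 C}"
  by (rule openin_interval_top_basis) (unfold interval_basis_def, blast)

lemma openin_interval_top_below: "C2 \<in> cuts K \<Longrightarrow> openin (interval_top K) {C\<in>cuts K. cut_less C C2}"
  by (rule openin_interval_top_basis) (unfold interval_basis_def, blast)

lemma openin_interval_top_cuts: "K \<noteq> {} \<Longrightarrow> openin (interval_top K) (cuts K)"
proof -
  assume K: "K \<noteq> {}"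
  have "Z \<in> cuts K \<Longrightarrow> cut_less ({}, K) Z \<or> cut_less Z (K, {})" for Z
    using K cutsD[of Z K] by (auto simp: cut_less_def)
  hence eq: "cuts K = {C\<in>cuts K. cut_less ({}, K) C} \<union> {C\<in>cuts K. cut_less C (K, {})}" by blast
  show ?thesis
    using openin_Un[OF openin_interval_top_above[OF bot_cut] openin_interval_top_below[OF top_cut], of K]
    by (simp only: eq[symmetric])
qed

definition right_open :: "'a::linordered_field set \<Rightarrow> ('a set \<times> 'a set) set \<Rightarrow> bool" where
  "right_open K U \<longleftrightarrow> (\<forall>X\<in>U. fst X \<noteq> K \<longrightarrow> (\<exists>C2\<in>cuts K. fst X \<subset> fst C2 \<and>
      (\<forall>Z\<in>cuts K. fst X \<subseteq> fst Z \<and> fst Z \<subset> fst C2 \<longrightarrow> Z \<in> U)))"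

definition left_open :: "'a::linordered_field set \<Rightarrow> ('a set \<times> 'a set) set \<Rightarrow> bool" where
  "left_open K U \<longleftrightarrow> (\<forall>X\<in>U. fst X \<noteq> {} \<longrightarrow> (\<exists>C1\<in>cuts K. fst C1 \<subset> fst X \<and>
      (\<forall>Z\<in>cuts K. fst C1 \<subset> fst Z \<and> fst Z \<subseteq> fst X \<longrightarrow> Z \<in> U)))"

lemma right_openD: "right_open K U \<Longrightarrow> X \<in> U \<Longrightarrow> fst X \<noteq> K \<Longrightarrow>
   \<exists>C2\<in>cuts K. fst X \<subset> fst C2 \<and> (\<forall>Z\<in>cuts K. fst X \<subseteq> fst Z \<and> fst Z \<subset> fst C2 \<longrightarrow> Z \<in> U)"
  unfolding right_open_def by blast

lemma left_openD: "left_open K U \<Longrightarrow> X \<in> U \<Longrightarrow> fst X \<noteq> {} \<Longrightarrow>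
   \<exists>C1\<in>cuts K. fst C1 \<subset> fst X \<and> (\<forall>Z\<in>cuts K. fst C1 \<subset> fst Z \<and> fst Z \<subseteq> fst X \<longrightarrow> Z \<in> U)"
  unfolding left_open_def by blast

lemma right_open_Int:
  assumes U: "right_open K U" and V: "right_open K V"
  shows "right_open K (U \<inter> V)"
  unfolding right_open_def
proof (intro ballI impI)
  fix X assume X: "X \<in> U \<inter> V" "fst X \<noteq> K"
  obtain C2 where C2: "C2 \<in> cuts K" "fst X \<subset> fst C2" "\<forall>Z\<in>cuts K. fst X \<subseteq> fst Z \<and> fst Z \<subset> fst C2 \<longrightarrow> Z \<in> U"
    using right_openD[OF U _ X(2)] X(1) by blast
  obtain C2' where C2': "C2' \<in> cuts K" "fst X \<subset> fst C2'" "\<forall>Z\<in>cuts K. fst X \<subseteq> fst Z \<and> fst Z \<subset> fst C2' \<longrightarrow> Z \<in> V"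
    using right_openD[OF V _ X(2)] X(1) by blast
  show "\<exists>C2\<in>cuts K. fst X \<subset> fst C2 \<and> (\<forall>Z\<in>cuts K. fst X \<subseteq> fst Z \<and> fst Z \<subset> fst C2 \<longrightarrow> Z \<in> U \<inter> V)"
  proof (cases "fst C2 \<subseteq> fst C2'")
    case True
    hence "\<forall>Z\<in>cuts K. fst X \<subseteq> fst Z \<and> fst Z \<subset> fst C2 \<longrightarrow> Z \<in> U \<inter> V" using C2(3) C2'(3) by blast
    thus ?thesis using C2(1,2) by blast
  next
    case False
    hence "fst C2' \<subseteq> fst C2" using cut_fst_linear[OF C2(1) C2'(1)] by blast
    hence "\<forall>Z\<in>cuts K. fst X \<subseteq> fst Z \<and> fst Z \<subset> fst C2' \<longrightarrow> Z \<in> U \<inter> V" using C2(3) C2'(3) by blast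
    thus ?thesis using C2'(1,2) by blast
  qed
qed

lemma left_open_Int:
  assumes U: "left_open K U" and V: "left_open K V"
  shows "left_open K (U \<inter> V)"
  unfolding left_open_def
proof (intro ballI impI)
  fix X assume X: "X \<in> U \<inter> V" "fst X \<noteq> {}"
  obtain C1 where C1: "C1 \<in> cuts K" "fst C1 \<subset> fst X" "\<forall>Z\<in>cuts K. fst C1 \<subset> fst Z \<and> fst Z \<subseteq> fst X \<longrightarrow> Z \<in> U"
    using left_openD[OF U _ X(2)] X(1) by blast
  obtain C1' where C1': "C1' \<in> cuts K" "fst C1' \<subset> fst X" "\<forall>Z\<in>cuts K. fst C1' \<subset> fst Z \<and> fst Z \<subseteq> fst X \<longrightarrow> Z \<in> V"
    using left_openD[OF V _ X(2)] X(1) by blast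
  show "\<exists>C1\<in>cuts K. fst C1 \<subset> fst X \<and> (\<forall>Z\<in>cuts K. fst C1 \<subset> fst Z \<and> fst Z \<subseteq> fst X \<longrightarrow> Z \<in> U \<inter> V)"
  proof (cases "fst C1 \<subseteq> fst C1'")
    case True
    hence "\<forall>Z\<in>cuts K. fst C1' \<subset> fst Z \<and> fst Z \<subseteq> fst X \<longrightarrow> Z \<in> U \<inter> V" using C1(3) C1'(3) by blast
    thus ?thesis using C1'(1,2) by blast
  next
    case False
    hence "fst C1' \<subseteq> fst C1" using cut_fst_linear[OF C1(1) C1'(1)] by blast
    hence "\<forall>Z\<in>cuts K. fst C1 \<subset> fst Z \<and> fst Z \<subseteq> fst X \<longrightarrow> Z \<in> U \<inter> V" using C1(3) C1'(3) by blast
    thus ?thesis using C1(1,2) by blast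
  qed
qed

lemma right_open_Union:
  assumes "\<And>U. U \<in> Us \<Longrightarrow> right_open K U"
  shows "right_open K (\<Union>Us)"
  unfolding right_open_def
proof (intro ballI impI)
  fix X assume "X \<in> \<Union>Us" "fst X \<noteq> K"
  then obtain U where U: "U \<in> Us" "X \<in> U" by blast
  then obtain C2 where "C2 \<in> cuts K" "fst X \<subset> fst C2" "\<forall>Z\<in>cuts K. fst X \<subseteq> fst Z \<and> fst Z \<subset> fst C2 \<longrightarrow> Z \<in> U"
    using right_openD[OF assms] \<open>fst X \<noteq> K\<close> by blast
  thus "\<exists>C2\<in>cuts K. fst X \<subset> fst C2 \<and> (\<forall>Z\<in>cuts K. fst X \<subseteq> fst Z \<and> fst Z \<subset> fst C2 \<longrightarrow> Z \<in> \<Union>Us)"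
    using U by blast
qed

lemma left_open_Union:
  assumes "\<And>U. U \<in> Us \<Longrightarrow> left_open K U"
  shows "left_open K (\<Union>Us)"
  unfolding left_open_def
proof (intro ballI impI)
  fix X assume "X \<in> \<Union>Us" "fst X \<noteq> {}"
  then obtain U where U: "U \<in> Us" "X \<in> U" by blast
  then obtain C1 where "C1 \<in> cuts K" "fst C1 \<subset> fst X" "\<forall>Z\<in>cuts K. fst C1 \<subset> fst Z \<and> fst Z \<subseteq> fst X \<longrightarrow> Z \<in> U"
    using left_openD[OF assms] \<open>fst X \<noteq> {}\<close> by blast
  thus "\<exists>C1\<in>cuts K. fst C1 \<subset> fst X \<and> (\<forall>Z\<in>cuts K. fst C1 \<subset> fst Z \<and> fst Z \<subseteq> fst X \<longrightarrow> Z \<in> \<Union>Us)"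
    using U by blast
qed

lemma interval_basis_right_left_open:
  assumes "S \<in> interval_basis K"
  shows "S \<subseteq> cuts K \<and> right_open K S \<and> left_open K S"
proof -
  have below_right: "right_open K {C\<in>cuts K. cut_less C C2}" if "C2 \<in> cuts K" for C2
    unfolding right_open_def cut_less_def using that by (intro ballI impI bexI[of _ C2]) auto
  have above_left: "left_open K {C\<in>cuts K. cut_less C1 C}" if "C1 \<in> cuts K" for C1
    unfolding left_open_def cut_less_def using that by (intro ballI impI bexI[of _ C1]) auto
  have above_right: "right_open K {C\<in>cuts K. cut_less C1 C}" for C1
    unfolding right_open_def cut_less_def
    by (intro ballI impI bexI[of _ "(K, {})"] top_cut) (auto dest: cutsD)
  have below_left: "left_open K {C\<in>cuts K. cut_less C C2}" for C2
    unfolding left_open_def cut_less_def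
    by (intro ballI impI bexI[of _ "({}, K)"] bot_cut) auto
  have "S \<in> {{C\<in>cuts K. cut_less C1 C \<and> cut_less C C2} | C1 C2. C1 \<in> cuts K \<and> C2 \<in> cuts K}
      \<or> S \<in> {{C\<in>cuts K. cut_less C1 C} | C1. C1 \<in> cuts K}
      \<or> S \<in> {{C\<in>cuts K. cut_less C C2} | C2. C2 \<in> cuts K}"
    using assms unfolding interval_basis_def by (simp only: Un_iff disj_assoc)
  thus ?thesis
  proof (elim disjE)
    assume "S \<in> {{C\<in>cuts K. cut_less C1 C \<and> cut_less C C2} | C1 C2. C1 \<in> cuts K \<and> C2 \<in> cuts K}"
    then obtain C1 C2 where C: "C1 \<in> cuts K" "C2 \<in> cuts K"
      and S: "S = {C\<in>cuts K. cut_less C1 C \<and> cut_less C C2}" by blast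
    have "S = {C\<in>cuts K. cut_less C1 C} \<inter> {C\<in>cuts K. cut_less C C2}" unfolding S by blast
    thus ?thesis
      using right_open_Int[OF above_right[of C1] below_right[OF C(2)]]
        left_open_Int[OF above_left[OF C(1)] below_left[of C2]]
      by auto
  next
    assume "S \<in> {{C\<in>cuts K. cut_less C1 C} | C1. C1 \<in> cuts K}"
    then obtain C1 where "C1 \<in> cuts K" "S = {C\<in>cuts K. cut_less C1 C}" by blast
    thus ?thesis using above_left above_right by simp
  next
    assume "S \<in> {{C\<in>cuts K. cut_less C C2} | C2. C2 \<in> cuts K}"
    then obtain C2 where "C2 \<in> cuts K" "S = {C\<in>cuts K. cut_less C C2}" by blast
    thus ?thesis using below_left below_right by simp
  qed
qed

lemma openin_interval_topD:
  assumes "openin (interval_top K) U"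
  shows "U \<subseteq> cuts K \<and> right_open K U \<and> left_open K U"
proof -
  have "generate_topology_on (interval_basis K) U"
    using assms by (simp add: interval_top_eq openin_topology_generated_by_iff)
  thus ?thesis
  proof (induction rule: generate_topology_on.induct)
    case Empty thus ?case by (simp add: right_open_def left_open_def)
  next
    case (Int a b) thus ?case using right_open_Int left_open_Int by blast
  next
    case (UN Ks) thus ?case using right_open_Union[of Ks K] left_open_Union[of Ks K] by blast
  next
    case (Basis s) thus ?case by (rule interval_basis_right_left_open)
  qed
qed

lemma openin_interval_topI:
  assumes K: "K \<noteq> {}" and sub: "U \<subseteq> cuts K" and r: "right_open K U" and l: "left_open K U"
  shows "openin (interval_top K) U"
proof (subst openin_subopen, intro ballI)
  fix X assume X: "X \<in> U"
  have XK: "X \<in> cuts K" using X sub by blast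
  obtain A where A: "openin (interval_top K) A" "X \<in> A" "\<forall>Z\<in>A. fst Z \<subseteq> fst X \<longrightarrow> Z \<in> U" "A \<subseteq> cuts K"
  proof (cases "fst X = {}")
    case True
    hence "\<forall>Z\<in>cuts K. fst Z \<subseteq> fst X \<longrightarrow> Z \<in> U" using cut_eqI[OF _ XK] X by blast
    thus ?thesis using that[OF openin_interval_top_cuts[OF K] XK] by blast
  next
    case False
    then obtain C1 where C1: "C1 \<in> cuts K" "fst C1 \<subset> fst X" "\<forall>Z\<in>cuts K. fst C1 \<subset> fst Z \<and> fst Z \<subseteq> fst X \<longrightarrow> Z \<in> U"
      using left_openD[OF l X] by blast
    show ?thesis by (rule that[OF openin_interval_top_above[OF C1(1)]]) (use C1 XK in \<open>auto simp: cut_less_def\<close>)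
  qed
  obtain B where B: "openin (interval_top K) B" "X \<in> B" "\<forall>Z\<in>B. fst X \<subseteq> fst Z \<longrightarrow> Z \<in> U"
  proof (cases "fst X = K")
    case True
    hence "\<forall>Z\<in>cuts K. fst X \<subseteq> fst Z \<longrightarrow> Z \<in> U" using cut_eqI[OF _ XK] cutsD X by blast
    thus ?thesis using that[OF openin_interval_top_cuts[OF K] XK] by blast
  next
    case False
    then obtain C2 where C2: "C2 \<in> cuts K" "fst X \<subset> fst C2" "\<forall>Z\<in>cuts K. fst X \<subseteq> fst Z \<and> fst Z \<subset> fst C2 \<longrightarrow> Z \<in> U"
      using right_openD[OF r X] by blast
    show ?thesis by (rule that[OF openin_interval_top_below[OF C2(1)]]) (use C2 XK in \<open>auto simp: cut_less_def\<close>)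
  qed
  have "A \<inter> B \<subseteq> U" using A B cut_fst_linear[OF _ XK] by blast
  thus "\<exists>T. openin (interval_top K) T \<and> X \<in> T \<and> T \<subseteq> U" using A B by (intro exI[of _ "A \<inter> B"]) auto
qed

lemma openin_full_top: "openin (full_top K) U \<longleftrightarrow> openin (interval_top K) U \<and> full_set K U"
proof -
  have "istopology (\<lambda>U. openin (interval_top K) U \<and> full_set K U)"
  proof (simp only: istopology_def, rule conjI; intro allI impI)
    fix S T assume "openin (interval_top K) S \<and> full_set K S" "openin (interval_top K) T \<and> full_set K T"
    thus "openin (interval_top K) (S \<inter> T) \<and> full_set K (S \<inter> T)"
      using openin_Int unfolding full_set_def by blast
  next
    fix Ks assume "\<forall>U\<in>Ks. openin (interval_top K) U \<and> full_set K U"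
    thus "openin (interval_top K) (\<Union>Ks) \<and> full_set K (\<Union>Ks)"
      using openin_Union[of Ks "interval_top K"] unfolding full_set_def by blast
  qed
  thus ?thesis unfolding full_top_def using topology_inverse' by metis
qed

lemma topspace_full_top: "K \<noteq> {} \<Longrightarrow> topspace (full_top K) = cuts K"
proof -
  assume K: "K \<noteq> {}"
  have "openin (full_top K) (cuts K)"
    using openin_interval_top_cuts[OF K] by (simp add: openin_full_top full_set_def)
  hence "cuts K \<subseteq> topspace (full_top K)" by (rule openin_subset)
  moreover have "topspace (full_top K) \<subseteq> cuts K"
    unfolding topspace_def by (auto simp: openin_full_top full_set_def)
  ultimately show ?thesis by blast
qed

lemma openin_full_top_inner_cuts:
  assumes "is_ball UNIV B"
  shows "openin (full_top UNIV) (inner_cuts B)"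
proof -
  have "inner_cuts B = {Z\<in>cuts UNIV. cut_less (lower_cut UNIV B) Z} \<inter> {Z\<in>cuts UNIV. cut_less Z (upper_cut UNIV B)}"
    by (auto simp: inner_cuts_def)
  moreover have "openin (interval_top UNIV) \<dots>"
    by (intro openin_Int openin_interval_top_above openin_interval_top_below lower_cut_cuts upper_cut_cuts)
  ultimately show ?thesis using full_set_inner_cuts[OF assms] by (simp add: openin_full_top)
qed

lemma openin_full_top_outer_cuts:
  assumes "is_ball UNIV B"
  shows "openin (full_top UNIV) (outer_cuts B)"
proof -
  have "outer_cuts B = {Z\<in>cuts UNIV. cut_less Z (lower_cut UNIV B)} \<union> {Z\<in>cuts UNIV. cut_less (upper_cut UNIV B) Z}"
    by (auto simp: outer_cuts_def)
  moreover have "openin (interval_top UNIV) \<dots>"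
    by (intro openin_Un openin_interval_top_above openin_interval_top_below lower_cut_cuts upper_cut_cuts)
  ultimately show ?thesis using full_set_outer_cuts[OF assms] by (simp add: openin_full_top)
qed

section \<open>Gaps between the two sides of a cut\<close>

definition gap :: "'a::linorder set \<Rightarrow> 'a set \<Rightarrow> 'a set" where
  "gap D E = {y. (\<forall>d\<in>D. d < y) \<and> (\<forall>e\<in>E. y < e)}"

text \<open>Every ball of \<open>F\<close> or \<open>R\<close> constructed below has a radius set of this form.\<close>

definition val_above :: "'a::linordered_field set \<Rightarrow> 'a set \<Rightarrow> 'a set" where
  "val_above K T = {w\<in>K - {0}. \<forall>t\<in>T. \<not> val_le w t}"

lemma final_seg_val_above: "final_seg K (val_above K T)"
  unfolding final_seg_def
proof (intro conjI ballI impI)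
  show "val_above K T \<subseteq> K - {0}" by (auto simp: val_above_def)
  fix w w' assume w: "w \<in> val_above K T" and w': "w' \<in> K - {0}" and v: "val_le w w'"
  have "\<not> val_le w' t" if "t \<in> T" for t
    using w that val_le_trans[OF v, of t] by (auto simp: val_above_def)
  thus "w' \<in> val_above K T" using w' by (auto simp: val_above_def)
qed

lemma gap_edges:
  assumes ne: "gap D E \<noteq> {}"
  shows "lower_cut UNIV (gap D E) = upper_cut UNIV D" "upper_cut UNIV (gap D E) = lower_cut UNIV E"
proof -
  obtain g0 where g0: "\<forall>d\<in>D. d < g0" "\<forall>e\<in>E. g0 < e" using ne by (auto simp: gap_def)
  have lower: "(\<forall>g\<in>gap D E. y < g) \<longleftrightarrow> (\<exists>d\<in>D. y \<le> d)" for y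
  proof
    assume y: "\<forall>g\<in>gap D E. y < g"
    show "\<exists>d\<in>D. y \<le> d"
    proof (rule ccontr)
      assume "\<not> (\<exists>d\<in>D. y \<le> d)"
      hence "\<forall>d\<in>D. d < y" by (simp add: not_le)
      moreover have "y < g0" using y g0 by (simp add: gap_def)
      ultimately have "y \<in> gap D E" using g0 by (auto simp: gap_def)
      thus False using y by blast
    qed
  qed (auto simp: gap_def intro: le_less_trans)
  have upper: "(\<exists>g\<in>gap D E. y \<le> g) \<longleftrightarrow> (\<forall>e\<in>E. y < e)" for y
  proof
    assume y: "\<forall>e\<in>E. y < e"
    show "\<exists>g\<in>gap D E. y \<le> g"
    proof (cases "\<forall>d\<in>D. d < y")
      case True thus ?thesis using y by (auto simp: gap_def)
    next
      case False
      then obtain d where "d \<in> D" "y \<le> d" by (auto simp: not_less)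
      hence "y \<le> g0" using g0 by (meson less_imp_le order_trans)
      moreover have "g0 \<in> gap D E" using g0 by (simp add: gap_def)
      ultimately show ?thesis by blast
    qed
  qed (auto simp: gap_def intro: le_less_trans)
  have "fst (lower_cut UNIV (gap D E)) = fst (upper_cut UNIV D)"
    using lower by (simp add: fst_lower_cut fst_upper_cut)
  thus "lower_cut UNIV (gap D E) = upper_cut UNIV D" by (rule cut_eqI[OF lower_cut_cuts upper_cut_cuts])
  have "fst (upper_cut UNIV (gap D E)) = fst (lower_cut UNIV E)"
    using upper by (simp add: fst_lower_cut fst_upper_cut)
  thus "upper_cut UNIV (gap D E) = lower_cut UNIV E" by (rule cut_eqI[OF upper_cut_cuts lower_cut_cuts])
qed

lemma gap_empty_imp_least_ext_eq:
  assumes C: "C \<in> cuts R" and G: "gap (fst C) (snd C) = {}"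
  shows "least_ext C = greatest_ext C"
proof -
  have "fst (greatest_ext C) \<subseteq> fst (least_ext C)"
  proof
    fix y assume "y \<in> fst (greatest_ext C)"
    hence "\<forall>e\<in>snd C. y < e" by (simp add: fst_greatest_ext)
    hence "\<not> (\<forall>d\<in>fst C. d < y)" using G by (auto simp: gap_def)
    thus "y \<in> fst (least_ext C)" by (auto simp: fst_least_ext not_less)
  qed
  thus ?thesis using least_ext_le_greatest_ext[OF C] cut_eqI[OF least_ext_cuts greatest_ext_cuts] by blast
qed

lemma gap_is_ball:
  assumes x: "x \<in> gap D E"
    and close: "\<And>y t. y \<in> gap D E \<Longrightarrow> y \<noteq> x \<Longrightarrow> t \<in> (\<lambda>d. x - d) ` D \<union> (\<lambda>e. e - x) ` E
      \<Longrightarrow> \<not> val_le (x - y) t"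
  shows "is_ball UNIV (gap D E)"
proof -
  define S where "S = val_above UNIV ((\<lambda>d. x - d) ` D \<union> (\<lambda>e. e - x) ` E)"
  have "y \<in> gap D E" if y: "x - y \<in> S" for y
  proof -
    have nv: "\<forall>t\<in>(\<lambda>d. x - d) ` D \<union> (\<lambda>e. e - x) ` E. \<not> val_le (x - y) t"
      using y by (simp add: S_def val_above_def)
    have "\<bar>x - y\<bar> < \<bar>x - d\<bar>" if "d \<in> D" for d
      using nv that abs_less_if_not_val_le by blast
    moreover have "\<bar>x - y\<bar> < \<bar>e - x\<bar>" if "e \<in> E" for e
      using nv that abs_less_if_not_val_le by blast
    ultimately show ?thesis using x by (force simp: gap_def abs_less_iff)
  qed
  hence "gap D E = ball_S UNIV S x"
    using x close by (auto simp: ball_S_def S_def val_above_def)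
  thus ?thesis unfolding is_ball_def S_def using final_seg_val_above by blast
qed

lemma not_ball_cut_sides_nonempty:
  assumes R: "subfield R" and C: "(D, E) \<in> cuts R" and nb: "\<not> ball_cut R (D, E)"
  shows "D \<noteq> {}" "E \<noteq> {}"
proof -
  have "(D, E) \<noteq> lower_cut R R" "(D, E) \<noteq> upper_cut R R"
    using nb is_ball_self[OF R] by (auto simp: ball_cut_def)
  thus "D \<noteq> {}" "E \<noteq> {}" using C by (auto simp: cuts_def lower_cut_self upper_cut_self)
qed

lemma not_ball_cut_no_min:
  assumes C: "(D, E) \<in> cuts R" and nb: "\<not> ball_cut R (D, E)"
  shows "\<not> (\<exists>m\<in>E. \<forall>e\<in>E. m \<le> e)"
proof
  assume "\<exists>m\<in>E. \<forall>e\<in>E. m \<le> e"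
  then obtain m where m: "m \<in> E" "\<forall>e\<in>E. m \<le> e" by blast
  have "m \<in> R" using C m(1) by (auto simp: cuts_def)
  hence "is_ball R {m}" by (rule is_ball_singleton)
  thus False using nb cut_eq_lower_cut_min[OF C m] unfolding ball_cut_def by blast
qed

lemma grid_bracket:
  fixes d u h :: "'a::linordered_field"
  assumes "d \<le> u" "u < d + of_nat n * h"
  shows "\<exists>k<n. d + of_nat k * h \<le> u \<and> u < d + of_nat (Suc k) * h"
  using assms(2)
proof (induction n)
  case 0 thus ?case using assms(1) by simp
next
  case (Suc n)
  show ?case
  proof (cases "u < d + of_nat n * h")
    case True thus ?thesis using Suc.IH by (metis less_Suc_eq)
  next
    case False thus ?thesis using Suc.prems by (intro exI[of _ n]) (auto simp: not_less)
  qed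
qed

text \<open>Otherwise a point of an \<open>R\<close>-rational grid from \<open>d\<close> to \<open>e\<close> with mesh below \<open>\<bar>x - y\<bar>\<close> would
  fall between \<open>x\<close> and \<open>y\<close>.\<close>

lemma gap_diff_not_val_le:
  assumes R: "subfield R" and C: "(D, E) \<in> cuts R"
    and x: "x \<in> gap D E" and y: "y \<in> gap D E"
    and xy: "x \<noteq> y" and d: "d \<in> D" and e: "e \<in> E"
  shows "\<not> val_le (x - y) (e - d)"
proof
  assume v: "val_le (x - y) (e - d)"
  have xy0: "x - y \<noteq> 0" using xy by simp
  obtain N :: nat where N: "\<bar>e - d\<bar> \<le> of_nat N * \<bar>x - y\<bar>" using v xy0 val_le_iff by blast
  define u where "u = min x y"
  define w where "w = max x y"
  have uw: "w - u = \<bar>x - y\<bar>" "u \<le> w" by (simp_all add: u_def w_def abs_if)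
  have uD: "\<forall>d'\<in>D. d' < u" and wE: "\<forall>e'\<in>E. w < e'" using x y by (simp_all add: u_def w_def gap_def)
  hence ed: "d < e" using d e uw by fastforce
  define h where "h = (e - d) / of_nat (Suc N)"
  have "of_nat (Suc N) \<noteq> (0::'a)" by (metis of_nat_0_less_iff zero_less_Suc less_irrefl)
  hence eh: "e = d + of_nat (Suc N) * h" unfolding h_def by (simp add: field_simps)
  have hlt: "h < \<bar>x - y\<bar>"
  proof -
    have "of_nat (Suc N) * h = e - d" using eh by simp
    also have "\<dots> \<le> of_nat N * \<bar>x - y\<bar>" using N ed by simp
    also have "\<dots> < of_nat (Suc N) * \<bar>x - y\<bar>" using xy0 by (simp add: algebra_simps)
    finally show ?thesis by (simp only: mult_less_cancel_left_pos of_nat_0_less_iff zero_less_Suc)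
  qed
  have "d \<le> u" "u < d + of_nat (Suc N) * h" using uD d eh uw wE e by fastforce+
  then obtain k where k: "d + of_nat k * h \<le> u" "u < d + of_nat (Suc k) * h"
    using grid_bracket by blast
  define r where "r = d + of_nat (Suc k) * h"
  have dR: "d \<in> R" "e \<in> R" using C d e by (auto simp: cuts_def)
  have hR: "h \<in> R" unfolding h_def using subfield_divide[OF R subfield_diff[OF R dR(2) dR(1)] subfield_of_nat[OF R]] .
  have "r \<in> R" unfolding r_def using subfield_add[OF R dR(1) subfield_mult[OF R subfield_of_nat[OF R] hR]] .
  hence "r \<in> D \<union> E" using C by (simp add: cuts_def)
  moreover have "u < r" using k(2) by (simp add: r_def)
  moreover have "r < w" using k(1) hlt uw by (simp add: r_def algebra_simps)
  ultimately show False using uD wE by fastforce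
qed

lemma ball_val_above_lower_subset:
  assumes C: "(D, E) \<in> cuts R" and d: "d \<in> D"
  shows "ball_S R (val_above R ((\<lambda>e. e - d) ` E)) d \<subseteq> D"
proof
  fix z assume z: "z \<in> ball_S R (val_above R ((\<lambda>e. e - d) ` E)) d"
  have "z < e" if e: "e \<in> E" for e
  proof (cases "d = z")
    case False
    hence "\<not> val_le (d - z) (e - d)" using z e by (auto simp: ball_S_def val_above_def)
    hence "\<bar>d - z\<bar> < \<bar>e - d\<bar>" by (rule abs_less_if_not_val_le)
    moreover have "d < e" using C d e by (auto simp: cuts_def)
    ultimately show ?thesis by (simp add: abs_less_iff)
  qed (use C d e in \<open>auto simp: cuts_def\<close>)
  thus "z \<in> D" using z C by (auto simp: ball_S_def cuts_def)
qed

lemma ball_val_above_upper_subset: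
  assumes C: "(D, E) \<in> cuts R" and e: "e \<in> E"
  shows "ball_S R (val_above R ((\<lambda>d. e - d) ` D)) e \<subseteq> E"
proof
  fix z assume z: "z \<in> ball_S R (val_above R ((\<lambda>d. e - d) ` D)) e"
  have "d < z" if d: "d \<in> D" for d
  proof (cases "e = z")
    case False
    hence "\<not> val_le (e - z) (e - d)" using z d by (auto simp: ball_S_def val_above_def)
    hence "\<bar>e - z\<bar> < \<bar>e - d\<bar>" by (rule abs_less_if_not_val_le)
    moreover have "d < e" using C d e by (auto simp: cuts_def)
    ultimately show ?thesis by (simp add: abs_less_iff)
  qed (use C d e in \<open>auto simp: cuts_def\<close>)
  thus "z \<in> E" using z C by (auto simp: ball_S_def cuts_def)
qed

lemma gap_near_lower_side:
  assumes R: "subfield R" and C: "(D, E) \<in> cuts R"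
    and x: "x \<in> gap D E" and y: "y \<in> gap D E" and xy: "x \<noteq> y"
    and d: "d \<in> D" and n: "\<bar>x - d\<bar> \<le> of_nat n * \<bar>x - y\<bar>"
    and d': "d' \<in> D" "d < d'" and e: "e \<in> E"
  shows "\<not> val_le (d - d') (e - d)"
proof -
  have far: "\<not> val_le (x - y) (e - d)" using gap_diff_not_val_le[OF R C x y xy d e] .
  have "d' < x" using x d' by (simp add: gap_def)
  hence "\<bar>d - d'\<bar> \<le> \<bar>x - d\<bar>" using d' by simp
  have "of_nat m * \<bar>d - d'\<bar> < \<bar>e - d\<bar>" for m
  proof -
    have "of_nat m * \<bar>d - d'\<bar> \<le> of_nat m * \<bar>x - d\<bar>"
      using \<open>\<bar>d - d'\<bar> \<le> \<bar>x - d\<bar>\<close> by (simp add: mult_left_mono)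
    also have "\<dots> \<le> of_nat m * (of_nat n * \<bar>x - y\<bar>)" using n by (simp add: mult_left_mono)
    also have "\<dots> = of_nat (m * n) * \<bar>x - y\<bar>" by (simp add: mult.assoc)
    also have "\<dots> < \<bar>e - d\<bar>" using of_nat_mult_abs_less_if_not_val_le[OF far] .
    finally show ?thesis .
  qed
  moreover have "e - d \<noteq> 0" using C d e by (force simp: cuts_def)
  ultimately show ?thesis by (simp add: not_val_le)
qed

lemma gap_near_upper_side:
  assumes R: "subfield R" and C: "(D, E) \<in> cuts R"
    and x: "x \<in> gap D E" and y: "y \<in> gap D E" and xy: "x \<noteq> y"
    and e: "e \<in> E" and n: "\<bar>e - x\<bar> \<le> of_nat n * \<bar>x - y\<bar>"
    and e': "e' \<in> E" "e' < e" and d: "d \<in> D"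
  shows "\<not> val_le (e - e') (e - d)"
proof -
  have far: "\<not> val_le (x - y) (e - d)" using gap_diff_not_val_le[OF R C x y xy d e] .
  have "x < e'" using x e' by (simp add: gap_def)
  hence "\<bar>e - e'\<bar> \<le> \<bar>e - x\<bar>" using e' by simp
  have "of_nat m * \<bar>e - e'\<bar> < \<bar>e - d\<bar>" for m
  proof -
    have "of_nat m * \<bar>e - e'\<bar> \<le> of_nat m * \<bar>e - x\<bar>"
      using \<open>\<bar>e - e'\<bar> \<le> \<bar>e - x\<bar>\<close> by (simp add: mult_left_mono)
    also have "\<dots> \<le> of_nat m * (of_nat n * \<bar>x - y\<bar>)" using n by (simp add: mult_left_mono)
    also have "\<dots> = of_nat (m * n) * \<bar>x - y\<bar>" by (simp add: mult.assoc)
    also have "\<dots> < \<bar>e - d\<bar>" using of_nat_mult_abs_less_if_not_val_le[OF far] .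
    finally show ?thesis .
  qed
  moreover have "e - d \<noteq> 0" using C d e by (force simp: cuts_def)
  ultimately show ?thesis by (simp add: not_val_le)
qed

lemma ball_cut_if_gap_near_lower_side:
  assumes R: "subfield R" and C: "(D, E) \<in> cuts R"
    and x: "x \<in> gap D E" and y: "y \<in> gap D E" and xy: "x \<noteq> y"
    and d: "d \<in> D" and n: "\<bar>x - d\<bar> \<le> of_nat n * \<bar>x - y\<bar>"
  shows "ball_cut R (D, E)"
proof -
  have dR: "d \<in> R" using C d by (auto simp: cuts_def)
  define B where "B = ball_S R (val_above R ((\<lambda>e. e - d) ` E)) d"
  have BD: "B \<subseteq> D" unfolding B_def using ball_val_above_lower_subset[OF C d] .
  have "d \<in> B" using ball_S_center[OF dR] by (simp add: B_def)
  have "d' \<in> fst (upper_cut R B)" if d': "d' \<in> D" for d'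
  proof -
    have d'R: "d' \<in> R" using C d' by (auto simp: cuts_def)
    show ?thesis
  proof (cases "d' \<le> d")
    case True thus ?thesis unfolding fst_upper_cut using d'R \<open>d \<in> B\<close> by blast
  next
    case False
    have "\<not> val_le (d - d') (e - d)" if "e \<in> E" for e
      using gap_near_lower_side[OF R C x y xy d n d'] False that by simp
    hence "d' \<in> B" using False d'R subfield_diff[OF R dR d'R]
      by (auto simp: B_def ball_S_def val_above_def)
    thus ?thesis using d'R by (auto simp: fst_upper_cut)
  qed
  qed
  moreover have "z \<in> D" if z: "z \<in> fst (upper_cut R B)" for z
  proof -
    obtain b where b: "b \<in> B" "z \<in> R" "z \<le> b" using z by (auto simp: fst_upper_cut)
    have "b \<in> fst (D, E)" using BD b(1) by auto
    from cut_fst_down_closed[OF C this b(2,3)] show ?thesis by simp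
  qed
  ultimately have "fst (upper_cut R B) = D" by blast
  hence "upper_cut R B = (D, E)" by (intro cut_eqI[OF upper_cut_cuts C]) simp
  moreover have "is_ball R B" unfolding is_ball_def B_def using dR final_seg_val_above by blast
  ultimately show ?thesis unfolding ball_cut_def by (intro exI[of _ B]) simp
qed

lemma ball_cut_if_gap_near_upper_side:
  assumes R: "subfield R" and C: "(D, E) \<in> cuts R"
    and x: "x \<in> gap D E" and y: "y \<in> gap D E" and xy: "x \<noteq> y"
    and e: "e \<in> E" and n: "\<bar>e - x\<bar> \<le> of_nat n * \<bar>x - y\<bar>"
  shows "ball_cut R (D, E)"
proof -
  have eR: "e \<in> R" using C e by (auto simp: cuts_def)
  define B where "B = ball_S R (val_above R ((\<lambda>d. e - d) ` D)) e"
  have BE: "B \<subseteq> E" unfolding B_def using ball_val_above_upper_subset[OF C e] .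
  have "e \<in> B" using ball_S_center[OF eR] by (simp add: B_def)
  have "e' \<in> snd (lower_cut R B)" if e': "e' \<in> E" for e'
  proof -
    have e'R: "e' \<in> R" using C e' by (auto simp: cuts_def)
    show ?thesis
  proof (cases "e \<le> e'")
    case True thus ?thesis unfolding snd_lower_cut using e'R \<open>e \<in> B\<close> by blast
  next
    case False
    have "\<not> val_le (e - e') (e - d)" if "d \<in> D" for d
      using gap_near_upper_side[OF R C x y xy e n e'] False that by simp
    hence "e' \<in> B" using False e'R subfield_diff[OF R eR e'R]
      by (auto simp: B_def ball_S_def val_above_def)
    thus ?thesis using e'R by (auto simp: snd_lower_cut)
  qed
  qed
  moreover have "z \<in> E" if z: "z \<in> snd (lower_cut R B)" for z
  proof -
    obtain b where b: "b \<in> B" "z \<in> R" "b \<le> z" using z by (auto simp: snd_lower_cut)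
    have "b \<in> snd (D, E)" using BE b(1) by auto
    from cut_snd_up_closed[OF C this b(2,3)] show ?thesis by simp
  qed
  ultimately have "snd (lower_cut R B) = E" by blast
  moreover have "fst (lower_cut R B) = R - snd (lower_cut R B)" "D = R - E"
    using cutsD[OF lower_cut_cuts, of R B] cutsD[OF C] by auto
  ultimately have "lower_cut R B = (D, E)" by (intro cut_eqI[OF lower_cut_cuts C]) simp
  moreover have "is_ball R B" unfolding is_ball_def B_def using eR final_seg_val_above by blast
  ultimately show ?thesis unfolding ball_cut_def by (intro exI[of _ B]) simp
qed

lemma gap_is_ball_if_not_ball_cut:
  assumes R: "subfield R" and C: "(D, E) \<in> cuts R" and nb: "\<not> ball_cut R (D, E)"
    and x: "x \<in> gap D E"
  shows "is_ball UNIV (gap D E)"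
proof (rule gap_is_ball[OF x])
  fix y t assume y: "y \<in> gap D E" "y \<noteq> x" and t: "t \<in> (\<lambda>d. x - d) ` D \<union> (\<lambda>e. e - x) ` E"
  have xy: "x \<noteq> y" and xy0: "x - y \<noteq> 0" using y(2) by auto
  show "\<not> val_le (x - y) t"
  proof
    assume "val_le (x - y) t"
    then obtain n :: nat where n: "\<bar>t\<bar> \<le> of_nat n * \<bar>x - y\<bar>" using val_le_iff[OF xy0] by blast
    have "ball_cut R (D, E)" using t
    proof
      assume "t \<in> (\<lambda>d. x - d) ` D"
      then obtain d where "d \<in> D" "t = x - d" by blast
      thus ?thesis using ball_cut_if_gap_near_lower_side[OF R C x y(1) xy, of d n] n by simp
    next
      assume "t \<in> (\<lambda>e. e - x) ` E"
      then obtain e where "e \<in> E" "t = e - x" by blast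
      thus ?thesis using ball_cut_if_gap_near_upper_side[OF R C x y(1) xy, of e n] n by simp
    qed
    thus False using nb by blast
  qed
qed

lemma not_ball_cut_exts:
  assumes R: "subfield R" and C: "(D, E) \<in> cuts R" and nb: "\<not> ball_cut R (D, E)"
  shows "least_ext (D, E) = greatest_ext (D, E) \<or> (\<exists>G. is_ball UNIV G
    \<and> lower_cut UNIV G = least_ext (D, E) \<and> upper_cut UNIV G = greatest_ext (D, E))"
proof (cases "gap D E = {}")
  case True thus ?thesis using gap_empty_imp_least_ext_eq[OF C] by simp
next
  case False
  then obtain x where "x \<in> gap D E" by blast
  hence "is_ball UNIV (gap D E)" by (rule gap_is_ball_if_not_ball_cut[OF R C nb])
  moreover have "lower_cut UNIV (gap D E) = least_ext (D, E)" "upper_cut UNIV (gap D E) = greatest_ext (D, E)"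
    using gap_edges[OF False] by (simp_all add: least_ext_def greatest_ext_def)
  ultimately show ?thesis by blast
qed

section \<open>Extensions of the edges of balls of the subfield\<close>

lemma ball_complD:
  assumes "ball_compl K B D E"
  shows "\<forall>d\<in>D. \<forall>b\<in>B. d < b" "\<forall>b\<in>B. \<forall>e\<in>E. b < e" "D \<union> B \<union> E = K"
  using assms unfolding ball_compl_def by blast+

text \<open>The only use of the convexity of \<open>vR\<close> in \<open>vF\<close>.\<close>

lemma val_convex_no_value_between:
  assumes R: "subfield R" and cv: "val_convex R" and c: "c \<in> S" and SR: "S \<subseteq> R - {0}"
    and t: "t \<in> R" "t \<noteq> 0" "t \<notin> S" and b: "b > 0"
    and small: "\<forall>s\<in>S. \<forall>m::nat. of_nat m * \<bar>s\<bar> < b"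
    and large: "\<forall>s\<in>R. s \<noteq> 0 \<longrightarrow> s \<notin> S \<longrightarrow> (\<forall>m::nat. of_nat m * b < \<bar>s\<bar>)"
  shows False
proof -
  have cR: "c \<in> R - {0}" using c SR by blast
  have "of_nat 1 * b < \<bar>t\<bar>" using large t by blast
  hence v1: "val_le t b" using t b by (intro val_le_if_abs_le) auto
  have "of_nat 1 * \<bar>c\<bar> < b" using small c by blast
  hence v2: "val_le b c" using b by (intro val_le_if_abs_le) auto
  have "t \<in> R - {0}" "b \<noteq> 0" using t b by auto
  hence "\<exists>c\<in>R - {0}. val_le c b \<and> val_le b c"
    using cv cR v1 v2 unfolding val_convex_def by blast
  then obtain c' where c': "c' \<in> R - {0}" "val_le c' b" "val_le b c'" by blast
  show False
  proof (cases "c' \<in> S")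
    case True
    obtain n :: nat where n: "\<bar>b\<bar> \<le> of_nat n * \<bar>c'\<bar>" using c' val_le_iff by blast
    have "of_nat (Suc n) * \<bar>c'\<bar> < b" using small True by blast
    moreover have "of_nat n * \<bar>c'\<bar> \<le> of_nat (Suc n) * \<bar>c'\<bar>" by (simp add: mult_right_mono)
    ultimately show False using n b by simp
  next
    case False
    have "b \<noteq> 0" using b by simp
    then obtain n :: nat where n: "\<bar>c'\<bar> \<le> of_nat n * \<bar>b\<bar>" using c'(3) val_le_iff by blast
    have "of_nat n * b < \<bar>c'\<bar>" using large c' False by blast
    thus False using n b by simp
  qed
qed

lemma lower_gap_dist_dominates_radii:
  assumes R: "subfield R" and S: "final_seg R S" and aR: "a \<in> R" and y: "y \<in> gap D (ball_S R S a)"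
  shows "\<forall>s\<in>S. \<forall>m::nat. of_nat m * \<bar>s\<bar> < a - y"
proof -
  let ?B = "ball_S R S a"
  have aB: "a \<in> ?B" using ball_S_center[OF aR] .
  have ya: "y < a" using y aB by (simp add: gap_def)
  show "\<forall>s\<in>S. \<forall>m::nat. of_nat m * \<bar>s\<bar> < a - y"
  proof (intro ballI allI)
    fix s and m :: nat assume s: "s \<in> S"
    show "of_nat m * \<bar>s\<bar> < a - y"
    proof (cases "m = 0")
      case False
      have sR: "s \<in> R" using s final_seg_subset[OF S] by blast
      have "of_nat m * \<bar>s\<bar> \<in> S" using final_seg_of_nat_mult[OF S R s] False by simp
      moreover have "a - of_nat m * \<bar>s\<bar> \<in> R"
        using subfield_diff[OF R aR subfield_mult[OF R subfield_of_nat[OF R] subfield_abs[OF R sR]]] .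
      ultimately have "a - of_nat m * \<bar>s\<bar> \<in> ?B" by (simp add: ball_S_def)
      hence "y < a - of_nat m * \<bar>s\<bar>" using y by (simp add: gap_def)
      thus ?thesis by simp
    qed (use ya in simp)
  qed
qed

lemma lower_gap_dist_dominated_by_nonradii:
  assumes R: "subfield R" and S: "final_seg R S" and aR: "a \<in> R"
    and bc: "ball_compl R (ball_S R S a) D E" and y: "y \<in> gap D (ball_S R S a)"
  shows "\<forall>s\<in>R. s \<noteq> 0 \<longrightarrow> s \<notin> S \<longrightarrow> (\<forall>m::nat. of_nat m * (a - y) < \<bar>s\<bar>)"
proof -
  let ?B = "ball_S R S a"
  note h = ball_complD[OF bc]
  have aB: "a \<in> ?B" using ball_S_center[OF aR] .
  show "\<forall>s\<in>R. s \<noteq> 0 \<longrightarrow> s \<notin> S \<longrightarrow> (\<forall>m::nat. of_nat m * (a - y) < \<bar>s\<bar>)"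
  proof (intro ballI impI allI)
    fix s and m :: nat assume s: "s \<in> R" "s \<noteq> 0" "s \<notin> S"
    show "of_nat m * (a - y) < \<bar>s\<bar>"
    proof (cases "m = 0")
      case False
      define q where "q = \<bar>s\<bar> / of_nat m"
      have qR: "q \<in> R" unfolding q_def using subfield_divide[OF R subfield_abs[OF R s(1)] subfield_of_nat[OF R]] .
      have qpos: "q > 0" using s False by (simp add: q_def)
      have "q \<notin> S" using final_seg_divide_of_nat[OF S s] False by (simp add: q_def)
      hence "a - q \<notin> ?B" using qpos by (simp add: ball_S_def)
      moreover have "a - q \<notin> E" using h(2) aB qpos by force
      ultimately have "a - q \<in> D" using h(3) subfield_diff[OF R aR qR] by blast
      hence "a - q < y" using y by (simp add: gap_def)
      hence "a - y < q" by simp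
      hence "of_nat m * (a - y) < of_nat m * q" using False by simp
      thus ?thesis using False by (simp add: q_def)
    qed (use s in simp)
  qed
qed

lemma upper_gap_dist_dominates_radii:
  assumes R: "subfield R" and S: "final_seg R S" and aR: "a \<in> R" and y: "y \<in> gap (ball_S R S a) E"
  shows "\<forall>s\<in>S. \<forall>m::nat. of_nat m * \<bar>s\<bar> < y - a"
proof -
  let ?B = "ball_S R S a"
  have aB: "a \<in> ?B" using ball_S_center[OF aR] .
  have ya: "a < y" using y aB by (simp add: gap_def)
  show "\<forall>s\<in>S. \<forall>m::nat. of_nat m * \<bar>s\<bar> < y - a"
  proof (intro ballI allI)
    fix s and m :: nat assume s: "s \<in> S"
    show "of_nat m * \<bar>s\<bar> < y - a"
    proof (cases "m = 0")
      case False
      have sR: "s \<in> R" using s final_seg_subset[OF S] by blast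
      have "- (of_nat m * \<bar>s\<bar>) \<in> S"
        using final_seg_uminus[OF S R final_seg_of_nat_mult[OF S R s]] False by simp
      moreover have "a + of_nat m * \<bar>s\<bar> \<in> R"
        using subfield_add[OF R aR subfield_mult[OF R subfield_of_nat[OF R] subfield_abs[OF R sR]]] .
      ultimately have "a + of_nat m * \<bar>s\<bar> \<in> ?B" by (simp add: ball_S_def)
      hence "a + of_nat m * \<bar>s\<bar> < y" using y by (simp add: gap_def)
      thus ?thesis by simp
    qed (use ya in simp)
  qed
qed

lemma upper_gap_dist_dominated_by_nonradii:
  assumes R: "subfield R" and S: "final_seg R S" and aR: "a \<in> R"
    and bc: "ball_compl R (ball_S R S a) D E" and y: "y \<in> gap (ball_S R S a) E"
  shows "\<forall>s\<in>R. s \<noteq> 0 \<longrightarrow> s \<notin> S \<longrightarrow> (\<forall>m::nat. of_nat m * (y - a) < \<bar>s\<bar>)"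
proof -
  let ?B = "ball_S R S a"
  note h = ball_complD[OF bc]
  have aB: "a \<in> ?B" using ball_S_center[OF aR] .
  show "\<forall>s\<in>R. s \<noteq> 0 \<longrightarrow> s \<notin> S \<longrightarrow> (\<forall>m::nat. of_nat m * (y - a) < \<bar>s\<bar>)"
  proof (intro ballI impI allI)
    fix s and m :: nat assume s: "s \<in> R" "s \<noteq> 0" "s \<notin> S"
    show "of_nat m * (y - a) < \<bar>s\<bar>"
    proof (cases "m = 0")
      case False
      define q where "q = \<bar>s\<bar> / of_nat m"
      have qR: "q \<in> R" unfolding q_def using subfield_divide[OF R subfield_abs[OF R s(1)] subfield_of_nat[OF R]] .
      have qpos: "q > 0" using s False by (simp add: q_def)
      have "- q \<notin> S" using final_seg_divide_of_nat[OF S s] False by (simp add: q_def)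
      hence "a + q \<notin> ?B" using qpos by (simp add: ball_S_def)
      moreover have "a + q \<notin> D" using h(1) aB qpos by force
      ultimately have "a + q \<in> E" using h(3) subfield_add[OF R aR qR] by blast
      hence "y < a + q" using y by (simp add: gap_def)
      hence "y - a < q" by simp
      hence "of_nat m * (y - a) < of_nat m * q" using False by simp
      thus ?thesis using False by (simp add: q_def)
    qed (use s in simp)
  qed
qed

text \<open>Nothing of \<open>F\<close> fits between a proper ball of \<open>R\<close> with nonempty radius set and the rest of
  \<open>R\<close>, so the edges of such a ball have a unique extension to \<open>F\<close>.\<close>

lemma ball_lower_edge_exts_eq:
  assumes R: "subfield R" and cv: "val_convex R" and S: "final_seg R S" and aR: "a \<in> R"
    and ne: "S \<noteq> {}" and nf: "ball_S R S a \<noteq> R" and bc: "ball_compl R (ball_S R S a) D E"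
  shows "upper_cut UNIV D = lower_cut UNIV (ball_S R S a \<union> E)"
proof -
  let ?B = "ball_S R S a"
  have "gap D ?B = {}"
  proof (rule ccontr)
    assume "gap D ?B \<noteq> {}"
    then obtain y where y: "y \<in> gap D ?B" by blast
    obtain t where t: "t \<in> R" "t \<noteq> 0" "t \<notin> S" using ball_S_neq_full[OF S R aR nf] by blast
    obtain c where "c \<in> S" using ne by blast
    moreover have "a - y > 0" using y ball_S_center[OF aR] by (simp add: gap_def)
    ultimately show False
      using val_convex_no_value_between[OF R cv _ final_seg_subset[OF S] t]
        lower_gap_dist_dominates_radii[OF R S aR y] lower_gap_dist_dominated_by_nonradii[OF R S aR bc y] by blast
  qed
  hence "gap D (?B \<union> E) = {}" by (auto simp: gap_def)
  moreover have "(D, ?B \<union> E) \<in> cuts R"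
    using lower_cut_ball_compl[OF bc] lower_cut_cuts ball_S_center[OF aR] by (metis empty_iff)
  ultimately show ?thesis using gap_empty_imp_least_ext_eq by (fastforce simp: least_ext_def greatest_ext_def)
qed

lemma ball_upper_edge_exts_eq:
  assumes R: "subfield R" and cv: "val_convex R" and S: "final_seg R S" and aR: "a \<in> R"
    and ne: "S \<noteq> {}" and nf: "ball_S R S a \<noteq> R" and bc: "ball_compl R (ball_S R S a) D E"
  shows "upper_cut UNIV (D \<union> ball_S R S a) = lower_cut UNIV E"
proof -
  let ?B = "ball_S R S a"
  have "gap ?B E = {}"
  proof (rule ccontr)
    assume "gap ?B E \<noteq> {}"
    then obtain y where y: "y \<in> gap ?B E" by blast
    obtain t where t: "t \<in> R" "t \<noteq> 0" "t \<notin> S" using ball_S_neq_full[OF S R aR nf] by blast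
    obtain c where "c \<in> S" using ne by blast
    moreover have "y - a > 0" using y ball_S_center[OF aR] by (simp add: gap_def)
    ultimately show False
      using val_convex_no_value_between[OF R cv _ final_seg_subset[OF S] t]
        upper_gap_dist_dominates_radii[OF R S aR y] upper_gap_dist_dominated_by_nonradii[OF R S aR bc y] by blast
  qed
  hence "gap (D \<union> ?B) E = {}" by (auto simp: gap_def)
  moreover have "(D \<union> ?B, E) \<in> cuts R"
    using upper_cut_ball_compl[OF bc] upper_cut_cuts ball_S_center[OF aR] by (metis empty_iff)
  ultimately show ?thesis using gap_empty_imp_least_ext_eq by (fastforce simp: least_ext_def greatest_ext_def)
qed

lemma less_if_of_nat_Suc_mult_le:
  fixes q w :: "'a::linordered_field"
  assumes "of_nat (Suc n) * q \<le> of_nat n * w" "w > 0"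
  shows "q < w"
proof (rule ccontr)
  assume "\<not> q < w"
  hence "of_nat (Suc n) * w \<le> of_nat (Suc n) * q" by (simp add: mult_left_mono)
  hence "of_nat (Suc n) * w \<le> of_nat n * w" using assms(1) by linarith
  thus False using assms(2) by (simp add: algebra_simps)
qed

text \<open>Otherwise, for \<open>q \<in> R\<close> of the value of \<open>a - r\<close> with \<open>q < \<bar>a - y\<bar>\<close>, one of \<open>a \<plusminus> q\<close> would be
  an element of \<open>D\<close> or \<open>E\<close> strictly between \<open>a\<close> and \<open>y\<close>.\<close>

lemma ball_compl_gap_close_to_center:
  assumes R: "subfield R" and S: "final_seg R S" and aR: "a \<in> R"
    and bc: "ball_compl R (ball_S R S a) D E"
    and y: "y \<in> gap D E" "y \<noteq> a"
    and r: "r \<in> R" "r \<notin> ball_S R S a" and n: "\<bar>a - r\<bar> \<le> of_nat n * \<bar>a - y\<bar>"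
  shows False
proof -
  let ?B = "ball_S R S a"
  note h = ball_complD[OF bc]
  have aB: "a \<in> ?B" using ball_S_center[OF aR] .
  have ra: "a - r \<noteq> 0" using r aB by auto
  define q where "q = \<bar>a - r\<bar> / of_nat (Suc n)"
  have sp: "(0::'a) < of_nat (Suc n)" by (rule of_nat_0_less_iff[THEN iffD2]) simp
  have qR: "q \<in> R"
    unfolding q_def using subfield_divide[OF R subfield_abs[OF R subfield_diff[OF R aR r(1)]] subfield_of_nat[OF R]] .
  have qpos: "q > 0" unfolding q_def using ra sp by (intro divide_pos_pos) simp_all
  have qeq: "of_nat (Suc n) * q = \<bar>a - r\<bar>" unfolding q_def using sp by simp
  have qlt: "q < \<bar>a - y\<bar>" using less_if_of_nat_Suc_mult_le[of n q "\<bar>a - y\<bar>"] qeq n y(2) by simp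
  have notS: "x \<notin> S" if "\<bar>x\<bar> = q" for x
  proof
    assume "x \<in> S"
    moreover have "x \<noteq> 0" "\<bar>a - r\<bar> \<le> of_nat (Suc n) * \<bar>x\<bar>" using that qpos qeq by auto
    ultimately have "a - r \<in> S"
      using final_segD[OF S _ subfield_diff[OF R aR r(1)] ra] val_le_iff by blast
    thus False using r by (simp add: ball_S_def)
  qed
  have "a + q \<notin> ?B" "a - q \<notin> ?B" using notS[of "-q"] notS[of q] qpos by (auto simp: ball_S_def)
  moreover have "a + q \<in> R" "a - q \<in> R" using subfield_add[OF R aR qR] subfield_diff[OF R aR qR] by auto
  moreover have "a + q \<notin> D" using h(1) aB qpos by force
  moreover have "a - q \<notin> E" using h(2) aB qpos by force
  ultimately have "a + q \<in> E" "a - q \<in> D" using h(3) by blast+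
  hence "a - q < y" "y < a + q" using y(1) by (simp_all add: gap_def)
  thus False using qlt by (simp add: abs_less_iff abs_if split: if_splits)
qed

lemma ball_compl_gap_is_ball:
  assumes R: "subfield R" and S: "final_seg R S" and aR: "a \<in> R"
    and bc: "ball_compl R (ball_S R S a) D E"
  shows "is_ball UNIV (gap D E)"
proof (rule gap_is_ball)
  note h = ball_complD[OF bc]
  have aB: "a \<in> ball_S R S a" using ball_S_center[OF aR] .
  show "a \<in> gap D E" using h aB by (simp add: gap_def)
  fix y t assume y: "y \<in> gap D E" "y \<noteq> a" and t: "t \<in> (\<lambda>d. a - d) ` D \<union> (\<lambda>e. e - a) ` E"
  have "a - y \<noteq> 0" using y(2) by simp
  show "\<not> val_le (a - y) t"
  proof
    assume "val_le (a - y) t"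
    then obtain n :: nat where n: "\<bar>t\<bar> \<le> of_nat n * \<bar>a - y\<bar>" using val_le_iff[OF \<open>a - y \<noteq> 0\<close>] by blast
    from t obtain r where "r \<in> D \<union> E" "\<bar>t\<bar> = \<bar>a - r\<bar>"
    proof
      assume "t \<in> (\<lambda>d. a - d) ` D"
      then obtain d where "d \<in> D" "t = a - d" by blast
      thus ?thesis using that[of d] by simp
    next
      assume "t \<in> (\<lambda>e. e - a) ` E"
      then obtain e where "e \<in> E" "t = e - a" by blast
      thus ?thesis using that[of e] by (simp add: abs_minus_commute)
    qed
    moreover have "D \<inter> ball_S R S a = {}" "E \<inter> ball_S R S a = {}" using h(1,2) by blast+
    ultimately show False using ball_compl_gap_close_to_center[OF R S aR bc y, of r n] n h(3) by auto
  qed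
qed

lemma convex_hull_ball:
  assumes R: "subfield R"
  obtains H where "is_ball UNIV H" "lower_cut UNIV H = lower_cut UNIV R" "upper_cut UNIV H = upper_cut UNIV R"
proof -
  define S where "S = {z::'a. z \<noteq> 0 \<and> (\<exists>r\<in>R - {0}. val_le r z)}"
  have fs: "final_seg UNIV S"
    unfolding final_seg_def S_def using val_le_trans by blast
  define H where "H = ball_S UNIV S 0"
  have bounded: "\<exists>r\<in>R. \<bar>h\<bar> \<le> r" if h: "h \<in> H" for h
  proof (cases "h = 0")
    case True thus ?thesis using subfield_0[OF R] by (intro bexI[of _ 0]) auto
  next
    case False
    hence "- h \<in> S" using h by (simp add: H_def ball_S_def)
    then obtain r where r: "r \<in> R" "r \<noteq> 0" "val_le r (- h)" by (auto simp: S_def)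
    then obtain n :: nat where "\<bar>- h\<bar> \<le> of_nat n * \<bar>r\<bar>" using val_le_iff by blast
    moreover have "of_nat n * \<bar>r\<bar> \<in> R" using subfield_mult[OF R subfield_of_nat[OF R] subfield_abs[OF R r(1)]] .
    ultimately show ?thesis by auto
  qed
  have RH: "r \<in> H" if r: "r \<in> R" for r
  proof (cases "r = 0")
    case False
    have "val_le r (- r)" using False by (intro val_le_if_abs_le) auto
    hence "- r \<in> S" using False r by (auto simp: S_def)
    thus ?thesis by (simp add: H_def ball_S_def)
  qed (simp add: H_def ball_S_def)
  have "(\<exists>h\<in>H. h \<le> y) \<longleftrightarrow> (\<exists>r\<in>R. r \<le> y)" for y
  proof
    assume "\<exists>h\<in>H. h \<le> y"
    then obtain h r where "h \<le> y" "r \<in> R" "\<bar>h\<bar> \<le> r" using bounded by blast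
    moreover have "- r \<in> R" using subfield_uminus[OF R \<open>r \<in> R\<close>] .
    ultimately show "\<exists>r\<in>R. r \<le> y" by (metis abs_le_iff minus_le_iff order.trans)
  qed (use RH in blast)
  moreover have "(\<exists>h\<in>H. y \<le> h) \<longleftrightarrow> (\<exists>r\<in>R. y \<le> r)" for y
  proof
    assume "\<exists>h\<in>H. y \<le> h"
    then obtain h r where "y \<le> h" "r \<in> R" "\<bar>h\<bar> \<le> r" using bounded by blast
    thus "\<exists>r\<in>R. y \<le> r" by (meson abs_ge_self order.trans)
  qed (use RH in blast)
  ultimately have "lower_cut UNIV H = lower_cut UNIV R" "upper_cut UNIV H = upper_cut UNIV R"
    by (simp_all add: lower_cut_def upper_cut_def)
  moreover have "is_ball UNIV H" unfolding is_ball_def H_def using fs by blast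
  ultimately show ?thesis using that by blast
qed

locale cut_map =
  fixes R :: "'a::linordered_field set" and \<iota> :: "'a set \<times> 'a set \<Rightarrow> 'a set \<times> 'a set"
  assumes subfield: "subfield R"
    and val_convex: "val_convex R"
    and maps_cuts: "\<iota> \<in> cuts R \<rightarrow> cuts UNIV"
begin

lemma image_cuts: "C \<in> cuts R \<Longrightarrow> \<iota> C \<in> cuts UNIV"
  using maps_cuts by blast

lemma R_nonempty: "R \<noteq> {}"
  using subfield_0[OF subfield] by blast

end

subsection \<open>Maps of the explicit form are continuous and compatible\<close>

locale explicit_cut_map = cut_map +
  assumes nonball_image: "\<forall>D E. (D, E) \<in> cuts R \<and> \<not> ball_cut R (D, E) \<longrightarrow>
      \<iota> (D, E) = upper_cut UNIV D \<or> \<iota> (D, E) = lower_cut UNIV E"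
    and ball_edge_image: "\<forall>B0 D E. is_ball R B0 \<and> B0 \<noteq> R \<and> ball_compl R B0 D E \<longrightarrow>
      \<iota> (lower_cut R B0) = upper_cut UNIV D \<and> \<iota> (upper_cut R B0) = lower_cut UNIV E"
    and bottom_image: "\<iota> ({}, R) = lower_cut UNIV R"
    and top_image: "\<iota> (R, {}) = upper_cut UNIV R"
begin

lemma ball_edge_images_eq_exts:
  assumes B: "is_ball R B" and nf: "B \<noteq> R"
  shows "\<iota> (lower_cut R B) = least_ext (lower_cut R B)" "\<iota> (upper_cut R B) = greatest_ext (upper_cut R B)"
proof -
  have "\<iota> (lower_cut R B) = upper_cut UNIV (strict_lower_bounds R B)"
    "\<iota> (upper_cut R B) = lower_cut UNIV (strict_upper_bounds R B)"
    using ball_edge_image B nf ball_compl_strict_bounds_if_is_ball[OF subfield B] by blast+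
  thus "\<iota> (lower_cut R B) = least_ext (lower_cut R B)" "\<iota> (upper_cut R B) = greatest_ext (upper_cut R B)"
    by (simp_all add: lower_cut_ball[OF subfield B] upper_cut_ball[OF subfield B] least_ext_def greatest_ext_def)
qed

lemma image_least_or_greatest_ext:
  assumes C: "C \<in> cuts R"
  shows "\<iota> C = least_ext C \<or> \<iota> C = greatest_ext C"
proof (cases "ball_cut R C")
  case False
  thus ?thesis using nonball_image C by (cases C) (auto simp: least_ext_def greatest_ext_def)
next
  case True
  then obtain B where B: "is_ball R B" "C = upper_cut R B \<or> C = lower_cut R B" by (auto simp: ball_cut_def)
  show ?thesis
  proof (cases "B = R")
    case True
    thus ?thesis using B(2) bottom_image top_image
      by (auto simp: lower_cut_self upper_cut_self least_ext_def greatest_ext_def)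
  next
    case False thus ?thesis using B ball_edge_images_eq_exts by blast
  qed
qed

lemma restrict_image: "C \<in> cuts R \<Longrightarrow> restrict_cut R (\<iota> C) = C"
  using image_least_or_greatest_ext restrict_least_ext restrict_greatest_ext by metis

lemma inj_on_cuts: "inj_on \<iota> (cuts R)"
  by (rule inj_onI) (metis restrict_image)

lemma ball_edge_images_are_ball_edges:
  assumes B: "is_ball R B"
  obtains G where "is_ball UNIV G" "\<iota> (lower_cut R B) = lower_cut UNIV G" "\<iota> (upper_cut R B) = upper_cut UNIV G"
proof (cases "B = R")
  case True
  obtain H where "is_ball UNIV H" "lower_cut UNIV H = lower_cut UNIV R" "upper_cut UNIV H = upper_cut UNIV R"
    using convex_hull_ball[OF subfield] by blast
  thus ?thesis using that True bottom_image top_image by (simp add: lower_cut_self upper_cut_self)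
next
  case False
  obtain a S where a: "a \<in> R" "final_seg R S" "B = ball_S R S a" using B by (auto simp: is_ball_def)
  have bc: "ball_compl R B (strict_lower_bounds R B) (strict_upper_bounds R B)" using ball_compl_strict_bounds_if_is_ball[OF subfield B] .
  have "a \<in> gap (strict_lower_bounds R B) (strict_upper_bounds R B)"
    using ball_complD[OF bc] ball_S_center[OF a(1)] a(3) by (simp add: gap_def)
  hence "gap (strict_lower_bounds R B) (strict_upper_bounds R B) \<noteq> {}" by blast
  moreover have "is_ball UNIV (gap (strict_lower_bounds R B) (strict_upper_bounds R B))"
    using ball_compl_gap_is_ball[OF subfield a(2,1)] bc a(3) by simp
  ultimately show ?thesis using that gap_edges ball_edge_image B False bc by metis
qed

lemma image_equiv_greatest_ext_if_no_min:
  assumes C: "(D, E) \<in> cuts R" and ne: "E \<noteq> {}" and nm: "\<not> (\<exists>m\<in>E. \<forall>e\<in>E. m \<le> e)"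
  shows "cut_equiv UNIV (\<iota> (D, E)) (greatest_ext (D, E))"
proof (cases "ball_cut R (D, E)")
  case False
  hence "least_ext (D, E) = greatest_ext (D, E) \<or> cut_equiv UNIV (least_ext (D, E)) (greatest_ext (D, E))"
    using not_ball_cut_exts[OF subfield C] cut_equiv_edges by metis
  thus ?thesis using image_least_or_greatest_ext[OF C] by (auto simp: cut_equiv_def)
next
  case True
  then obtain B where B: "is_ball R B" "(D, E) = upper_cut R B \<or> (D, E) = lower_cut R B"
    by (auto simp: ball_cut_def)
  have "\<iota> (D, E) = greatest_ext (D, E)"
  proof (cases "B = R")
    case True
    hence "(D, E) = ({}, R)" using B(2) ne by (auto simp: lower_cut_self upper_cut_self)
    thus ?thesis using bottom_image by (simp add: greatest_ext_def)
  next
    case False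
    obtain a S where a: "a \<in> R" "final_seg R S" "B = ball_S R S a" using B(1) by (auto simp: is_ball_def)
    show ?thesis using B(2)
    proof
      assume "(D, E) = lower_cut R B"
      hence E: "E = B \<union> strict_upper_bounds R B" using lower_cut_ball[OF subfield B(1)] by simp
      have "S \<noteq> {}"
      proof
        assume "S = {}"
        hence "B = {a}" using a ball_S_empty by simp
        hence "a \<in> E" "\<forall>e\<in>E. a \<le> e" using E by (auto simp: strict_upper_bounds_def)
        thus False using nm by blast
      qed
      hence "upper_cut UNIV (strict_lower_bounds R B) = lower_cut UNIV (B \<union> strict_upper_bounds R B)"
        using ball_lower_edge_exts_eq[OF subfield val_convex a(2,1)] a(3) False
          ball_compl_strict_bounds_if_is_ball[OF subfield B(1)] by blast
      thus ?thesis using ball_edge_images_eq_exts[OF B(1) False] \<open>(D, E) = lower_cut R B\<close>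
        lower_cut_ball[OF subfield B(1)] by (simp add: least_ext_def greatest_ext_def)
    qed (use ball_edge_images_eq_exts[OF B(1) False] in simp)
  qed
  thus ?thesis by (simp add: cut_equiv_def)
qed

lemma image_equiv_least_ext_if_no_max:
  assumes C: "(D, E) \<in> cuts R" and ne: "D \<noteq> {}" and nm: "\<not> (\<exists>m\<in>D. \<forall>d\<in>D. d \<le> m)"
  shows "cut_equiv UNIV (\<iota> (D, E)) (least_ext (D, E))"
proof (cases "ball_cut R (D, E)")
  case False
  hence "least_ext (D, E) = greatest_ext (D, E) \<or> cut_equiv UNIV (greatest_ext (D, E)) (least_ext (D, E))"
    using not_ball_cut_exts[OF subfield C] cut_equiv_edges by metis
  thus ?thesis using image_least_or_greatest_ext[OF C] by (auto simp: cut_equiv_def)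
next
  case True
  then obtain B where B: "is_ball R B" "(D, E) = upper_cut R B \<or> (D, E) = lower_cut R B"
    by (auto simp: ball_cut_def)
  have "\<iota> (D, E) = least_ext (D, E)"
  proof (cases "B = R")
    case True
    hence "(D, E) = (R, {})" using B(2) ne by (auto simp: lower_cut_self upper_cut_self)
    thus ?thesis using top_image by (simp add: least_ext_def)
  next
    case False
    obtain a S where a: "a \<in> R" "final_seg R S" "B = ball_S R S a" using B(1) by (auto simp: is_ball_def)
    show ?thesis using B(2)
    proof
      assume "(D, E) = upper_cut R B"
      hence D: "D = strict_lower_bounds R B \<union> B" using upper_cut_ball[OF subfield B(1)] by simp
      have "S \<noteq> {}"
      proof
        assume "S = {}"
        hence "B = {a}" using a ball_S_empty by simp
        hence "a \<in> D" "\<forall>d\<in>D. d \<le> a" using D by (auto simp: strict_lower_bounds_def)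
        thus False using nm by blast
      qed
      hence "upper_cut UNIV (strict_lower_bounds R B \<union> B) = lower_cut UNIV (strict_upper_bounds R B)"
        using ball_upper_edge_exts_eq[OF subfield val_convex a(2,1)] a(3) False
          ball_compl_strict_bounds_if_is_ball[OF subfield B(1)] by blast
      thus ?thesis using ball_edge_images_eq_exts[OF B(1) False] \<open>(D, E) = upper_cut R B\<close>
        upper_cut_ball[OF subfield B(1)] by (simp add: least_ext_def greatest_ext_def)
    qed (use ball_edge_images_eq_exts[OF B(1) False] in simp)
  qed
  thus ?thesis by (simp add: cut_equiv_def)
qed

lemma preimage_full:
  assumes U: "full_set UNIV U"
  shows "full_set R {C\<in>cuts R. \<iota> C \<in> U}"
proof (rule full_setI)
  fix B assume B: "is_ball R B"
  obtain G where G: "is_ball UNIV G" "\<iota> (lower_cut R B) = lower_cut UNIV G" "\<iota> (upper_cut R B) = upper_cut UNIV G"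
    using ball_edge_images_are_ball_edges[OF B] .
  assume "lower_cut R B \<in> {C\<in>cuts R. \<iota> C \<in> U} \<or> upper_cut R B \<in> {C\<in>cuts R. \<iota> C \<in> U}"
  thus "lower_cut R B \<in> {C\<in>cuts R. \<iota> C \<in> U} \<and> upper_cut R B \<in> {C\<in>cuts R. \<iota> C \<in> U}"
    using full_setD[OF U] cut_equiv_edges[OF G(1)] G(2,3) lower_cut_cuts upper_cut_cuts by fastforce
qed auto

lemma preimage_right_open_no_min:
  assumes U: "openin (full_top UNIV) U" and C: "(D, E) \<in> cuts R" and XU: "\<iota> (D, E) \<in> U"
    and ne: "E \<noteq> {}" and nm: "\<not> (\<exists>m\<in>E. \<forall>e\<in>E. m \<le> e)"
  shows "\<exists>C2\<in>cuts R. D \<subset> fst C2 \<and> (\<forall>Z\<in>cuts R. D \<subseteq> fst Z \<and> fst Z \<subset> fst C2 \<longrightarrow> \<iota> Z \<in> U)"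
proof -
  have Uo: "openin (interval_top UNIV) U" and Uf: "full_set UNIV U" using U by (auto simp: openin_full_top)
  have hU: "greatest_ext (D, E) \<in> U"
    using full_setD[OF Uf XU greatest_ext_cuts image_equiv_greatest_ext_if_no_min[OF C ne nm]] .
  have "fst (greatest_ext (D, E)) \<noteq> UNIV" using ne by (auto simp: fst_greatest_ext)
  then obtain C2' where C2': "C2' \<in> cuts UNIV" "fst (greatest_ext (D, E)) \<subset> fst C2'"
    "\<forall>Z\<in>cuts UNIV. fst (greatest_ext (D, E)) \<subseteq> fst Z \<and> fst Z \<subset> fst C2' \<longrightarrow> Z \<in> U"
    using right_openD openin_interval_topD[OF Uo] hU by metis
  obtain y where y: "y \<in> fst C2'" "y \<notin> fst (greatest_ext (D, E))" using C2'(2) by blast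
  then obtain e where e: "e \<in> E" "e \<le> y" by (auto simp: fst_greatest_ext not_less)
  have eC2: "e \<in> fst C2'" using cut_fst_down_closed[OF C2'(1) y(1), of e] e by simp
  obtain e' where e': "e' \<in> E" "e' < e" using nm e by (meson not_le)
  have eR: "e \<in> R" "e' \<in> R" using C e e' by (auto simp: cuts_def)
  have "D \<subset> fst (lower_cut R {e})"
    using C e e' eR by (auto simp: fst_lower_cut_single cuts_def)
  moreover have "\<iota> Z \<in> U" if Z: "Z \<in> cuts R" "D \<subseteq> fst Z" "fst Z \<subset> fst (lower_cut R {e})" for Z
  proof (cases "fst Z = D")
    case True thus ?thesis using cut_eqI[OF Z(1) C] XU by simp
  next
    case False
    then obtain r where r: "r \<in> fst Z" "r \<notin> D" using Z(2) by blast
    have "r \<in> E" using r cutsD[OF Z(1)] C by (auto simp: cuts_def)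
    hence "r \<in> snd (greatest_ext (D, E))" by (auto simp: snd_greatest_ext)
    moreover have "r \<in> fst (\<iota> Z)" using restrict_cut_fst_subset[OF restrict_image[OF Z(1)]] r(1) by blast
    ultimately have l1: "fst (greatest_ext (D, E)) \<subset> fst (\<iota> Z)"
      by (rule fst_psubset_if_separated[OF greatest_ext_cuts image_cuts[OF Z(1)]])
    have "e \<in> snd Z" using Z(3) cutsD[OF Z(1)] eR by (auto simp: fst_lower_cut_single)
    hence "e \<in> snd (\<iota> Z)" using restrict_cut_snd_subset[OF restrict_image[OF Z(1)]] by blast
    hence "fst (\<iota> Z) \<subset> fst C2'" by (rule fst_psubset_if_separated[OF image_cuts[OF Z(1)] C2'(1) _ eC2])
    thus ?thesis using C2'(3) image_cuts[OF Z(1)] l1 by blast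
  qed
  ultimately show ?thesis using lower_cut_cuts by blast
qed

lemma preimage_left_open_no_max:
  assumes U: "openin (full_top UNIV) U" and C: "(D, E) \<in> cuts R" and XU: "\<iota> (D, E) \<in> U"
    and ne: "D \<noteq> {}" and nm: "\<not> (\<exists>m\<in>D. \<forall>d\<in>D. d \<le> m)"
  shows "\<exists>C1\<in>cuts R. fst C1 \<subset> D \<and> (\<forall>Z\<in>cuts R. fst C1 \<subset> fst Z \<and> fst Z \<subseteq> D \<longrightarrow> \<iota> Z \<in> U)"
proof -
  have Uo: "openin (interval_top UNIV) U" and Uf: "full_set UNIV U" using U by (auto simp: openin_full_top)
  have lU: "least_ext (D, E) \<in> U"
    using full_setD[OF Uf XU least_ext_cuts image_equiv_least_ext_if_no_max[OF C ne nm]] .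
  have "fst (least_ext (D, E)) \<noteq> {}" using ne by (auto simp: fst_least_ext)
  then obtain C1' where C1': "C1' \<in> cuts UNIV" "fst C1' \<subset> fst (least_ext (D, E))"
    "\<forall>Z\<in>cuts UNIV. fst C1' \<subset> fst Z \<and> fst Z \<subseteq> fst (least_ext (D, E)) \<longrightarrow> Z \<in> U"
    using left_openD openin_interval_topD[OF Uo] lU by metis
  obtain y where y: "y \<in> fst (least_ext (D, E))" "y \<notin> fst C1'" using C1'(2) by blast
  then obtain d where d: "d \<in> D" "y \<le> d" by (auto simp: fst_least_ext)
  have "d \<notin> fst C1'" using cut_fst_down_closed[OF C1'(1), of d y] y d by blast
  hence dC1: "d \<in> snd C1'" using cutsD[OF C1'(1)] by blast
  obtain d' where d': "d' \<in> D" "d < d'" using nm d by (meson not_le)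
  have dR: "d \<in> R" "d' \<in> R" using C d d' by (auto simp: cuts_def)
  have "fst (upper_cut R {d}) \<subset> D"
    using cut_fst_down_closed[OF C, of d] d d' dR by (auto simp: fst_upper_cut_single)
  moreover have "\<iota> Z \<in> U" if Z: "Z \<in> cuts R" "fst (upper_cut R {d}) \<subset> fst Z" "fst Z \<subseteq> D" for Z
  proof (cases "fst Z = D")
    case True thus ?thesis using cut_eqI[OF Z(1) C] XU by simp
  next
    case False
    then obtain r where r: "r \<in> D" "r \<notin> fst Z" using Z(3) by blast
    have "r \<in> snd Z" using r cutsD[OF Z(1)] C by (auto simp: cuts_def)
    hence "r \<in> snd (\<iota> Z)" using restrict_cut_snd_subset[OF restrict_image[OF Z(1)]] by blast
    moreover have "r \<in> fst (least_ext (D, E))" using r by (auto simp: fst_least_ext)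
    ultimately have l1: "fst (\<iota> Z) \<subset> fst (least_ext (D, E))"
      by (rule fst_psubset_if_separated[OF image_cuts[OF Z(1)] least_ext_cuts])
    have "d \<in> fst Z" using Z(2) dR by (auto simp: fst_upper_cut_single)
    hence "d \<in> fst (\<iota> Z)" using restrict_cut_fst_subset[OF restrict_image[OF Z(1)]] by blast
    hence "fst C1' \<subset> fst (\<iota> Z)" by (rule fst_psubset_if_separated[OF C1'(1) image_cuts[OF Z(1)] dC1])
    thus ?thesis using C1'(3) image_cuts[OF Z(1)] l1 by blast
  qed
  ultimately show ?thesis using upper_cut_cuts by blast
qed

lemma preimage_right_open:
  assumes U: "openin (full_top UNIV) U"
  shows "right_open R {C\<in>cuts R. \<iota> C \<in> U}"
  unfolding right_open_def
proof (intro ballI impI)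
  fix X assume XP: "X \<in> {C\<in>cuts R. \<iota> C \<in> U}" and nt: "fst X \<noteq> R"
  obtain D E where X: "X = (D, E)" by (cases X)
  have C: "(D, E) \<in> cuts R" and XU: "\<iota> (D, E) \<in> U" using XP X by auto
  have ne: "E \<noteq> {}" using nt X C by (auto simp: cuts_def)
  show "\<exists>C2\<in>cuts R. fst X \<subset> fst C2 \<and> (\<forall>Z\<in>cuts R. fst X \<subseteq> fst Z \<and> fst Z \<subset> fst C2 \<longrightarrow> Z \<in> {C\<in>cuts R. \<iota> C \<in> U})"
  proof (cases "\<exists>m\<in>E. \<forall>e\<in>E. m \<le> e")
    case True
    then obtain m where m: "m \<in> E" "\<forall>e\<in>E. m \<le> e" by blast
    have "D \<subset> fst (upper_cut R {m})"
      using C m by (auto simp: fst_upper_cut_single cuts_def intro: less_imp_le)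
    moreover have "\<iota> Z \<in> U" if "Z \<in> cuts R" "D \<subseteq> fst Z" "fst Z \<subset> fst (upper_cut R {m})" for Z
      using cut_eq_if_below_min_successor[OF C m that] XU by simp
    ultimately show ?thesis unfolding X by (intro bexI[OF _ upper_cut_cuts]) auto
  next
    case False
    then obtain C2 where "C2 \<in> cuts R" "D \<subset> fst C2" "\<forall>Z\<in>cuts R. D \<subseteq> fst Z \<and> fst Z \<subset> fst C2 \<longrightarrow> \<iota> Z \<in> U"
      using preimage_right_open_no_min[OF U C XU ne] by blast
    thus ?thesis unfolding X by (intro bexI[of _ C2]) auto
  qed
qed

lemma preimage_left_open:
  assumes U: "openin (full_top UNIV) U"
  shows "left_open R {C\<in>cuts R. \<iota> C \<in> U}"
  unfolding left_open_def
proof (intro ballI impI)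
  fix X assume XP: "X \<in> {C\<in>cuts R. \<iota> C \<in> U}" and nb: "fst X \<noteq> {}"
  obtain D E where X: "X = (D, E)" by (cases X)
  have C: "(D, E) \<in> cuts R" and XU: "\<iota> (D, E) \<in> U" using XP X by auto
  have ne: "D \<noteq> {}" using nb X by auto
  show "\<exists>C1\<in>cuts R. fst C1 \<subset> fst X \<and> (\<forall>Z\<in>cuts R. fst C1 \<subset> fst Z \<and> fst Z \<subseteq> fst X \<longrightarrow> Z \<in> {C\<in>cuts R. \<iota> C \<in> U})"
  proof (cases "\<exists>m\<in>D. \<forall>d\<in>D. d \<le> m")
    case True
    then obtain m where m: "m \<in> D" "\<forall>d\<in>D. d \<le> m" by blast
    have "x \<in> D" if "x \<in> R" "x < m" for x
    proof (rule ccontr)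
      assume "x \<notin> D"
      hence "x \<in> snd (D, E)" using that cutsD[OF C] by simp
      thus False using cut_fst_less_snd[OF C, of m x] m(1) that(2) by simp
    qed
    hence "fst (lower_cut R {m}) \<subset> D" using m(1) by (auto simp: fst_lower_cut_single)
    moreover have "\<iota> Z \<in> U" if "Z \<in> cuts R" "fst (lower_cut R {m}) \<subset> fst Z" "fst Z \<subseteq> D" for Z
      using cut_eq_if_above_max_predecessor[OF C m that] XU by simp
    ultimately show ?thesis unfolding X by (intro bexI[OF _ lower_cut_cuts]) auto
  next
    case False
    then obtain C1 where "C1 \<in> cuts R" "fst C1 \<subset> D" "\<forall>Z\<in>cuts R. fst C1 \<subset> fst Z \<and> fst Z \<subseteq> D \<longrightarrow> \<iota> Z \<in> U"
      using preimage_left_open_no_max[OF U C XU ne] by blast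
    thus ?thesis unfolding X by (intro bexI[of _ C1]) auto
  qed
qed

lemma continuous: "continuous_map (full_top R) (full_top UNIV) \<iota>"
  unfolding continuous_map_def topspace_full_top[OF R_nonempty] topspace_full_top[OF UNIV_not_empty]
proof (intro conjI allI impI)
  show "\<iota> \<in> cuts R \<rightarrow> cuts UNIV" by (rule maps_cuts)
  fix U :: "('a set \<times> 'a set) set" assume U: "openin (full_top UNIV) U"
  have "openin (interval_top R) {C\<in>cuts R. \<iota> C \<in> U}"
    using openin_interval_topI[OF R_nonempty _ preimage_right_open[OF U] preimage_left_open[OF U]] by blast
  moreover have "full_set R {C\<in>cuts R. \<iota> C \<in> U}"
    using U preimage_full by (simp add: openin_full_top)
  ultimately show "openin (full_top R) {C\<in>cuts R. \<iota> C \<in> U}" by (simp add: openin_full_top)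
qed

end

subsection \<open>Continuous compatible maps have the explicit form\<close>

lemma point_gap_is_ball:
  assumes R: "subfield R" and a: "a \<in> R"
  shows "is_ball UNIV (gap {x\<in>R. x < a} {x\<in>R. a < x})" "a \<in> gap {x\<in>R. x < a} {x\<in>R. a < x}"
proof -
  have "final_seg R {}" by (simp add: final_seg_def)
  moreover have "ball_compl R (ball_S R {} a) {x\<in>R. x < a} {x\<in>R. a < x}"
    using a by (auto simp: ball_S_empty ball_compl_def)
  ultimately show "is_ball UNIV (gap {x\<in>R. x < a} {x\<in>R. a < x})" by (rule ball_compl_gap_is_ball[OF R _ a])
  show "a \<in> gap {x\<in>R. x < a} {x\<in>R. a < x}" by (simp add: gap_def)
qed

locale continuous_cut_map = cut_map +
  assumes continuous: "continuous_map (full_top R) (full_top UNIV) \<iota>"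
    and restrict_image: "\<forall>C\<in>cuts R. restrict_cut R (\<iota> C) = C"
begin

lemma image_between_exts:
  "C \<in> cuts R \<Longrightarrow> fst (least_ext C) \<subseteq> fst (\<iota> C)"
  "C \<in> cuts R \<Longrightarrow> fst (\<iota> C) \<subseteq> fst (greatest_ext C)"
  using restrict_cut_eq_between image_cuts restrict_image by blast+

lemma fst_subset_image: "C \<in> cuts R \<Longrightarrow> fst C \<subseteq> fst (\<iota> C)"
  and snd_subset_image: "C \<in> cuts R \<Longrightarrow> snd C \<subseteq> snd (\<iota> C)"
  using restrict_cut_fst_subset restrict_cut_snd_subset restrict_image by blast+

lemma image_eq_if_exts_eq:
  assumes C: "C \<in> cuts R" and eq: "least_ext C = greatest_ext C"
  shows "\<iota> C = least_ext C"
  using image_between_exts[OF C] eq cut_eqI[OF image_cuts[OF C] least_ext_cuts] by (metis subset_antisym)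

lemma image_psubset_if_neq_least_ext:
  assumes C: "C \<in> cuts R" and ne: "\<iota> C \<noteq> least_ext C"
  shows "fst (least_ext C) \<subset> fst (\<iota> C)"
proof -
  have "fst (least_ext C) \<noteq> fst (\<iota> C)" using ne cut_eqI[OF least_ext_cuts image_cuts[OF C]] by metis
  thus ?thesis using image_between_exts(1)[OF C] by blast
qed

lemma image_psubset_if_neq_greatest_ext:
  assumes C: "C \<in> cuts R" and ne: "\<iota> C \<noteq> greatest_ext C"
  shows "fst (\<iota> C) \<subset> fst (greatest_ext C)"
proof -
  have "fst (greatest_ext C) \<noteq> fst (\<iota> C)" using ne cut_eqI[OF greatest_ext_cuts image_cuts[OF C]] by metis
  thus ?thesis using image_between_exts(2)[OF C] by blast
qed

lemma preimage_right_left_open: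
  assumes "openin (full_top UNIV) U"
  shows "right_open R {C\<in>cuts R. \<iota> C \<in> U}" "left_open R {C\<in>cuts R. \<iota> C \<in> U}"
proof -
  have "openin (full_top R) {x \<in> topspace (full_top R). \<iota> x \<in> U}"
    using continuous assms unfolding continuous_map_def by blast
  hence "openin (interval_top R) {C\<in>cuts R. \<iota> C \<in> U}"
    using topspace_full_top[OF R_nonempty] by (simp add: openin_full_top)
  thus "right_open R {C\<in>cuts R. \<iota> C \<in> U}" "left_open R {C\<in>cuts R. \<iota> C \<in> U}"
    using openin_interval_topD by blast+
qed

lemma image_right_nbhd:
  assumes U: "openin (full_top UNIV) U" and C: "C \<in> cuts R" "\<iota> C \<in> U" "fst C \<noteq> R"
  obtains e where "e \<in> snd C" "\<And>Z. Z \<in> cuts R \<Longrightarrow> fst C \<subseteq> fst Z \<Longrightarrow> e \<in> snd Z \<Longrightarrow> \<iota> Z \<in> U"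
proof -
  obtain C2 where C2: "C2 \<in> cuts R" "fst C \<subset> fst C2"
      "\<forall>Z\<in>cuts R. fst C \<subseteq> fst Z \<and> fst Z \<subset> fst C2 \<longrightarrow> Z \<in> {C\<in>cuts R. \<iota> C \<in> U}"
    using right_openD[OF preimage_right_left_open(1)[OF U]] C by blast
  obtain e where e: "e \<in> fst C2" "e \<notin> fst C" using C2(2) by blast
  have "e \<in> snd C" using e cutsD[OF C2(1)] cutsD[OF C(1)] by blast
  moreover have "\<iota> Z \<in> U" if "Z \<in> cuts R" "fst C \<subseteq> fst Z" "e \<in> snd Z" for Z
    using C2(3) fst_psubset_if_separated[OF that(1) C2(1) that(3) e(1)] that by blast
  ultimately show ?thesis using that by blast
qed

lemma image_left_nbhd:
  assumes U: "openin (full_top UNIV) U" and C: "C \<in> cuts R" "\<iota> C \<in> U" "fst C \<noteq> {}"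
  obtains d where "d \<in> fst C" "\<And>Z. Z \<in> cuts R \<Longrightarrow> d \<in> fst Z \<Longrightarrow> fst Z \<subseteq> fst C \<Longrightarrow> \<iota> Z \<in> U"
proof -
  obtain C1 where C1: "C1 \<in> cuts R" "fst C1 \<subset> fst C"
      "\<forall>Z\<in>cuts R. fst C1 \<subset> fst Z \<and> fst Z \<subseteq> fst C \<longrightarrow> Z \<in> {C\<in>cuts R. \<iota> C \<in> U}"
    using left_openD[OF preimage_right_left_open(2)[OF U]] C by blast
  obtain d where d: "d \<in> fst C" "d \<notin> fst C1" using C1(2) by blast
  have "d \<in> snd C1" using d cutsD[OF C1(1)] cutsD[OF C(1)] by blast
  hence "\<iota> Z \<in> U" if "Z \<in> cuts R" "d \<in> fst Z" "fst Z \<subseteq> fst C" for Z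
    using C1(3) fst_psubset_if_separated[OF C1(1) that(1) _ that(2)] that by blast
  thus ?thesis using that d(1) by blast
qed

lemma image_not_outside_R:
  assumes Z: "Z \<in> cuts R" "fst Z \<noteq> {}" "snd Z \<noteq> {}"
    and H: "lower_cut UNIV H = lower_cut UNIV R" "upper_cut UNIV H = upper_cut UNIV R"
  shows "\<iota> Z \<notin> outer_cuts H"
  using exts_between_edges_of_R[OF Z] image_between_exts[OF Z(1)] H
  by (auto simp: outer_cuts_def cut_less_def)

lemma bottom_image: "\<iota> ({}, R) = lower_cut UNIV R"
proof (rule ccontr)
  assume ne: "\<iota> ({}, R) \<noteq> lower_cut UNIV R"
  have C0: "({}, R) \<in> cuts R" by (rule bot_cut)
  have "fst (\<iota> ({}, R)) \<subseteq> fst (lower_cut UNIV R)"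
    using image_between_exts(2)[OF C0] by (simp add: greatest_ext_def)
  hence lt: "fst (\<iota> ({}, R)) \<subset> fst (lower_cut UNIV R)"
    using ne cut_eqI[OF image_cuts[OF C0] lower_cut_cuts] by blast
  obtain H where H: "is_ball UNIV H" "lower_cut UNIV H = lower_cut UNIV R" "upper_cut UNIV H = upper_cut UNIV R"
    using convex_hull_ball[OF subfield] by blast
  have "\<iota> ({}, R) \<in> outer_cuts H" using image_cuts[OF C0] lt H(2) by (simp add: outer_cuts_def cut_less_def)
  then obtain e where e: "e \<in> R" "\<And>Z. Z \<in> cuts R \<Longrightarrow> e \<in> snd Z \<Longrightarrow> \<iota> Z \<in> outer_cuts H"
    using image_right_nbhd[OF openin_full_top_outer_cuts[OF H(1)] C0] R_nonempty by auto
  have "e - 1 \<in> R" using subfield_diff[OF subfield e(1) subfield_1[OF subfield]] .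
  hence "fst (upper_cut R {e - 1}) \<noteq> {}" "e \<in> snd (upper_cut R {e - 1})"
    using e(1) by (auto simp: fst_upper_cut snd_upper_cut)
  moreover from this have "snd (upper_cut R {e - 1}) \<noteq> {}" by blast
  ultimately show False using e(2) image_not_outside_R[OF upper_cut_cuts _ _ H(2,3)] upper_cut_cuts by blast
qed

lemma top_image: "\<iota> (R, {}) = upper_cut UNIV R"
proof (rule ccontr)
  assume ne: "\<iota> (R, {}) \<noteq> upper_cut UNIV R"
  have C0: "(R, {}) \<in> cuts R" by (rule top_cut)
  have "fst (upper_cut UNIV R) \<subseteq> fst (\<iota> (R, {}))"
    using image_between_exts(1)[OF C0] by (simp add: least_ext_def)
  hence lt: "fst (upper_cut UNIV R) \<subset> fst (\<iota> (R, {}))"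
    using ne cut_eqI[OF image_cuts[OF C0] upper_cut_cuts] by blast
  obtain H where H: "is_ball UNIV H" "lower_cut UNIV H = lower_cut UNIV R" "upper_cut UNIV H = upper_cut UNIV R"
    using convex_hull_ball[OF subfield] by blast
  have "\<iota> (R, {}) \<in> outer_cuts H" using image_cuts[OF C0] lt H(3) by (simp add: outer_cuts_def cut_less_def)
  then obtain d where d: "d \<in> R"
    "\<And>Z. Z \<in> cuts R \<Longrightarrow> d \<in> fst Z \<Longrightarrow> fst Z \<subseteq> fst (R, {}) \<Longrightarrow> \<iota> Z \<in> outer_cuts H"
    using image_left_nbhd[OF openin_full_top_outer_cuts[OF H(1)] C0] R_nonempty by auto
  have "d + 1 \<in> R" using subfield_add[OF subfield d(1) subfield_1[OF subfield]] .
  hence "d \<in> fst (upper_cut R {d})" "snd (upper_cut R {d}) \<noteq> {}"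
    using d(1) by (auto simp: fst_upper_cut snd_upper_cut)
  moreover from this have "fst (upper_cut R {d}) \<noteq> {}" by blast
  moreover have "fst (upper_cut R {d}) \<subseteq> fst (R, {})" by (auto simp: fst_upper_cut)
  ultimately show False using d(2) image_not_outside_R[OF upper_cut_cuts _ _ H(2,3)] upper_cut_cuts by blast
qed

lemma point_lower_edge_image:
  assumes a: "a \<in> R"
  shows "\<iota> (lower_cut R {a}) = upper_cut UNIV {x\<in>R. x < a}"
proof (rule ccontr)
  assume ne: "\<iota> (lower_cut R {a}) \<noteq> upper_cut UNIV {x\<in>R. x < a}"
  let ?C = "lower_cut R {a}" and ?G = "gap {x\<in>R. x < a} {x\<in>R. a < x}"
  have C: "?C \<in> cuts R" "fst ?C = {x\<in>R. x < a}" "a \<in> snd ?C"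
    using a lower_cut_cuts by (auto simp: fst_lower_cut_single snd_lower_cut)
  have G: "lower_cut UNIV ?G = upper_cut UNIV {x\<in>R. x < a}" "upper_cut UNIV ?G = lower_cut UNIV {x\<in>R. a < x}"
    using gap_edges[of "{x\<in>R. x < a}" "{x\<in>R. a < x}"] point_gap_is_ball(2)[OF subfield a] by auto
  have "fst (lower_cut UNIV ?G) \<subset> fst (\<iota> ?C)"
    using image_psubset_if_neq_least_ext[OF C(1)] ne G(1) C(2) by (simp add: least_ext_def)
  moreover have "a \<in> snd (\<iota> ?C)" using snd_subset_image[OF C(1)] C(3) by blast
  hence "fst (\<iota> ?C) \<subset> fst (upper_cut UNIV ?G)" unfolding G(2)
    by (rule fst_psubset_if_separated[OF image_cuts[OF C(1)] lower_cut_cuts]) (simp add: fst_lower_cut)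
  ultimately have inner: "\<iota> ?C \<in> inner_cuts ?G" using image_cuts[OF C(1)] by (simp add: inner_cuts_def cut_less_def)
  have "a - 1 \<in> fst ?C" using C(2) subfield_diff[OF subfield a subfield_1[OF subfield]] by simp
  hence "fst ?C \<noteq> {}" by blast
  then show False
  proof (rule image_left_nbhd[OF openin_full_top_inner_cuts[OF point_gap_is_ball(1)[OF subfield a]] C(1) inner])
    fix d assume d: "d \<in> fst ?C"
      "\<And>Z. Z \<in> cuts R \<Longrightarrow> d \<in> fst Z \<Longrightarrow> fst Z \<subseteq> fst ?C \<Longrightarrow> \<iota> Z \<in> inner_cuts ?G"
    let ?Z = "upper_cut R {d}"
    have dR: "d \<in> R" "d < a" using d(1) unfolding C(2) by simp_all
    have "d \<in> fst ?Z" "fst ?Z \<subseteq> fst ?C" using dR unfolding C(2) fst_upper_cut_single by auto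
    hence "\<iota> ?Z \<in> inner_cuts ?G" by (rule d(2)[OF upper_cut_cuts])
    hence lt: "fst (lower_cut UNIV ?G) \<subset> fst (\<iota> ?Z)" by (simp add: inner_cuts_def cut_less_def)
    define m where "m = (d + a) / 2"
    have m: "m \<in> R" "d < m" "m < a"
      using subfield_midpoint[OF subfield dR(1) a] dR(2) unfolding m_def by (simp_all add: field_simps)
    hence "m \<in> snd ?Z" unfolding snd_upper_cut by simp
    hence "m \<in> snd (\<iota> ?Z)" using snd_subset_image[OF upper_cut_cuts, of "{d}"] by blast
    moreover have "m \<in> fst (lower_cut UNIV ?G)" unfolding G(1) fst_upper_cut using m by blast
    hence "m \<in> fst (\<iota> ?Z)" using lt by blast
    ultimately show False using cutsD[OF image_cuts[OF upper_cut_cuts, of "{d}"]] by blast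
  qed
qed

lemma point_upper_edge_image:
  assumes a: "a \<in> R"
  shows "\<iota> (upper_cut R {a}) = lower_cut UNIV {x\<in>R. a < x}"
proof (rule ccontr)
  assume ne: "\<iota> (upper_cut R {a}) \<noteq> lower_cut UNIV {x\<in>R. a < x}"
  let ?C = "upper_cut R {a}" and ?G = "gap {x\<in>R. x < a} {x\<in>R. a < x}"
  have C: "?C \<in> cuts R" "snd ?C = {x\<in>R. a < x}" "a \<in> fst ?C"
    using a upper_cut_cuts by (auto simp: fst_upper_cut snd_upper_cut)
  have G: "lower_cut UNIV ?G = upper_cut UNIV {x\<in>R. x < a}" "upper_cut UNIV ?G = lower_cut UNIV {x\<in>R. a < x}"
    using gap_edges[of "{x\<in>R. x < a}" "{x\<in>R. a < x}"] point_gap_is_ball(2)[OF subfield a] by auto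
  have "fst (\<iota> ?C) \<subset> fst (upper_cut UNIV ?G)"
    using image_psubset_if_neq_greatest_ext[OF C(1)] ne G(2) C(2) by (simp add: greatest_ext_def)
  moreover have "a \<in> fst (\<iota> ?C)" using fst_subset_image[OF C(1)] C(3) by blast
  hence "fst (lower_cut UNIV ?G) \<subset> fst (\<iota> ?C)" unfolding G(1)
    by (rule fst_psubset_if_separated[OF upper_cut_cuts image_cuts[OF C(1)], rotated]) (auto simp: snd_upper_cut)
  ultimately have inner: "\<iota> ?C \<in> inner_cuts ?G" using image_cuts[OF C(1)] by (simp add: inner_cuts_def cut_less_def)
  have "a + 1 \<in> snd ?C" using C(2) subfield_add[OF subfield a subfield_1[OF subfield]] by simp
  hence "fst ?C \<noteq> R" using cutsD[OF C(1)] by blast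
  then show False
  proof (rule image_right_nbhd[OF openin_full_top_inner_cuts[OF point_gap_is_ball(1)[OF subfield a]] C(1) inner])
    fix e assume e: "e \<in> snd ?C"
      "\<And>Z. Z \<in> cuts R \<Longrightarrow> fst ?C \<subseteq> fst Z \<Longrightarrow> e \<in> snd Z \<Longrightarrow> \<iota> Z \<in> inner_cuts ?G"
    let ?Z = "lower_cut R {e}"
    have eR: "e \<in> R" "a < e" using e(1) unfolding C(2) by simp_all
    have "fst ?C \<subseteq> fst ?Z" "e \<in> snd ?Z" using eR unfolding fst_upper_cut fst_lower_cut snd_lower_cut by auto
    hence "\<iota> ?Z \<in> inner_cuts ?G" by (rule e(2)[OF lower_cut_cuts])
    hence lt: "fst (\<iota> ?Z) \<subset> fst (upper_cut UNIV ?G)" by (simp add: inner_cuts_def cut_less_def)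
    define m where "m = (a + e) / 2"
    have m: "m \<in> R" "a < m" "m < e"
      using subfield_midpoint[OF subfield a eR(1)] eR(2) unfolding m_def by (simp_all add: field_simps)
    hence "m \<in> fst ?Z" unfolding fst_lower_cut by simp
    hence mZ: "m \<in> fst (\<iota> ?Z)" using fst_subset_image[OF lower_cut_cuts, of "{e}"] by blast
    have "fst (upper_cut UNIV ?G) \<subseteq> {y. y < m}" unfolding G(2) fst_lower_cut using m by blast
    hence "fst (upper_cut UNIV ?G) \<subseteq> fst (\<iota> ?Z)"
      using cut_fst_down_closed[OF image_cuts[OF lower_cut_cuts[of R "{e}"]] mZ UNIV_I] less_imp_le by blast
    thus False using lt by blast
  qed
qed

lemma ball_edge_images:
  assumes B: "is_ball R B" and nf: "B \<noteq> R" and bc: "ball_compl R B D E"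
  shows "\<iota> (lower_cut R B) = upper_cut UNIV D \<and> \<iota> (upper_cut R B) = lower_cut UNIV E"
proof -
  obtain a S where a: "a \<in> R" "final_seg R S" "B = ball_S R S a" using B by (auto simp: is_ball_def)
  show ?thesis
  proof (cases "S = {}")
    case True
    hence B1: "B = {a}" using a ball_S_empty by simp
    hence "D = {x\<in>R. x < a}" "E = {x\<in>R. a < x}"
      using ball_compl_unique[OF bc] by (auto simp: strict_lower_bounds_def strict_upper_bounds_def)
    thus ?thesis using point_lower_edge_image[OF a(1)] point_upper_edge_image[OF a(1)] B1 by simp
  next
    case False
    have lower: "lower_cut R B = (D, B \<union> E)" and upper: "upper_cut R B = (D \<union> B, E)"
      using lower_cut_ball_compl[OF bc] upper_cut_ball_compl[OF bc] is_ball_nonempty[OF B] by auto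
    have l: "least_ext (lower_cut R B) = greatest_ext (lower_cut R B)"
      using ball_lower_edge_exts_eq[OF subfield val_convex a(2,1) False] a(3) nf bc lower
      by (simp add: least_ext_def greatest_ext_def)
    have u: "least_ext (upper_cut R B) = greatest_ext (upper_cut R B)"
      using ball_upper_edge_exts_eq[OF subfield val_convex a(2,1) False] a(3) nf bc upper
      by (simp add: least_ext_def greatest_ext_def)
    have "\<iota> (lower_cut R B) = least_ext (lower_cut R B)" by (rule image_eq_if_exts_eq[OF lower_cut_cuts l])
    moreover have "\<iota> (upper_cut R B) = greatest_ext (upper_cut R B)"
      using image_eq_if_exts_eq[OF upper_cut_cuts u] u by simp
    ultimately show ?thesis using lower upper by (simp add: least_ext_def greatest_ext_def)
  qed
qed

lemma nonball_image:
  assumes C: "(D, E) \<in> cuts R" and nb: "\<not> ball_cut R (D, E)"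
  shows "\<iota> (D, E) = upper_cut UNIV D \<or> \<iota> (D, E) = lower_cut UNIV E"
proof (cases "least_ext (D, E) = greatest_ext (D, E)")
  case True thus ?thesis using image_eq_if_exts_eq[OF C] by (simp add: least_ext_def)
next
  case False
  then obtain G where G: "is_ball UNIV G" "lower_cut UNIV G = least_ext (D, E)" "upper_cut UNIV G = greatest_ext (D, E)"
    using not_ball_cut_exts[OF subfield C nb] by blast
  show ?thesis
  proof (rule ccontr)
    assume "\<not> ?thesis"
    hence "\<iota> (D, E) \<noteq> least_ext (D, E)" "\<iota> (D, E) \<noteq> greatest_ext (D, E)"
      by (simp_all add: least_ext_def greatest_ext_def)
    hence inner: "\<iota> (D, E) \<in> inner_cuts G"
      using image_psubset_if_neq_least_ext[OF C] image_psubset_if_neq_greatest_ext[OF C] G(2,3) image_cuts[OF C]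
      by (simp add: inner_cuts_def cut_less_def)
    have "E \<noteq> {}" using not_ball_cut_sides_nonempty[OF subfield C nb] by blast
    hence "fst (D, E) \<noteq> R" using C by (auto simp: cuts_def)
    thus False
    proof (rule image_right_nbhd[OF openin_full_top_inner_cuts[OF G(1)] C inner])
      fix e assume e: "e \<in> snd (D, E)"
        "\<And>Z. Z \<in> cuts R \<Longrightarrow> fst (D, E) \<subseteq> fst Z \<Longrightarrow> e \<in> snd Z \<Longrightarrow> \<iota> Z \<in> inner_cuts G"
      obtain e' where e': "e' \<in> E" "e' < e" using not_ball_cut_no_min[OF C nb] e(1) by (auto simp: not_le)
      let ?Z = "upper_cut R {e'}"
      have e'R: "e' \<in> R" using C e'(1) by (auto simp: cuts_def)
      have "fst (D, E) \<subseteq> fst ?Z" "e \<in> snd ?Z"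
        using C e' e(1) by (auto simp: fst_upper_cut snd_upper_cut cuts_def intro: less_imp_le)
      hence "\<iota> ?Z \<in> inner_cuts G" by (rule e(2)[OF upper_cut_cuts])
      hence "fst (\<iota> ?Z) \<subset> fst (greatest_ext (D, E))" using G(3) by (simp add: inner_cuts_def cut_less_def)
      moreover have "e' \<in> fst (\<iota> ?Z)" using fst_subset_image[OF upper_cut_cuts, of "{e'}"] e'R by (auto simp: fst_upper_cut)
      ultimately show False using e'(1) by (auto simp: fst_greatest_ext)
    qed
  qed
qed

lemma is_explicit_cut_map: "explicit_cut_map R \<iota>"
  by unfold_locales (use nonball_image ball_edge_images bottom_image top_image in blast)+

end

lemma (in explicit_cut_map) is_continuous_cut_map: "continuous_cut_map R \<iota>"
  by unfold_locales (use continuous restrict_image in blast)+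

theorem proposition4p8:
  fixes R :: "'a::linordered_field set"
    and \<iota> :: "'a set \<times> 'a set \<Rightarrow> 'a set \<times> 'a set"
  assumes "subfield R"
    and "val_convex R"
    and "\<iota> \<in> cuts R \<rightarrow> cuts UNIV"
  shows "(inj_on \<iota> (cuts R)
          \<and> continuous_map (full_top R) (full_top UNIV) \<iota>
          \<and> (\<forall>C\<in>cuts R. restrict_cut R (\<iota> C) = C))
     \<longleftrightarrow>
         ((\<forall>D E. (D, E) \<in> cuts R \<and> \<not> ball_cut R (D, E) \<longrightarrow>
              \<iota> (D, E) = upper_cut UNIV D \<or> \<iota> (D, E) = lower_cut UNIV E)
          \<and> (\<forall>B0 D E. is_ball R B0 \<and> B0 \<noteq> R \<and> ball_compl R B0 D E \<longrightarrow>
              \<iota> (lower_cut R B0) = upper_cut UNIV D \<and> \<iota> (upper_cut R B0) = lower_cut UNIV E)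
          \<and> \<iota> ({}, R) = lower_cut UNIV R
          \<and> \<iota> (R, {}) = upper_cut UNIV R)"
proof -
  have M: "cut_map R \<iota>" using assms by unfold_locales
  have "continuous_cut_map R \<iota> \<longleftrightarrow> continuous_cut_map_axioms R \<iota>"
    "explicit_cut_map R \<iota> \<longleftrightarrow> explicit_cut_map_axioms R \<iota>"
    using M by (simp_all add: continuous_cut_map_def explicit_cut_map_def)
  moreover have "continuous_cut_map R \<iota> \<longleftrightarrow> explicit_cut_map R \<iota>"
    using continuous_cut_map.is_explicit_cut_map explicit_cut_map.is_continuous_cut_map by blast
  moreover have "explicit_cut_map R \<iota> \<Longrightarrow> inj_on \<iota> (cuts R)" by (rule explicit_cut_map.inj_on_cuts)
  ultimately have "inj_on \<iota> (cuts R) \<and> continuous_cut_map_axioms R \<iota> \<longleftrightarrow> explicit_cut_map_axioms R \<iota>"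
    by blast
  thus ?thesis unfolding continuous_cut_map_axioms_def explicit_cut_map_axioms_def by (simp only: conj_assoc)
qed

end
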